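(* Let $T>0$, $\lambda>0$, $\varrho\ge0$, $\phi\ge0$ and $G\in\mathcal G$. Then for every $t\in[0,T]$ the operator $\mathbf D_t=2\lambda\,{\rm id}+\tilde{\mathbf G}_t+\tilde{\mathbf G}_t^*+2\phi\,\mathbf 1_t^*\mathbf 1_t$ on $L^2([0,T],\mathbb R)$ is positive definite, self-adjoint and invertible.
   Context: A kernel $G:[0,T]^2\to[0,\infty)$ is Volterra if $G(t,s)=0$ for $s\ge t$, nonnegative definite if $\int_0^T\int_0^T(G(t,s)+G(s,t))f(s)f(t)dsdt\ge0$ for all $f\in L^2([0,T],\mathbb R)$; $\mathcal G$ is the class of nonnegative definite Volterra kernels with $\sup_t\int_0^T|G(t,s)|^2ds+\sup_s\int_0^T|G(t,s)|^2dt<\infty$ and $\lim_{h\to0}\int_0^T|G(t+h,s)-G(t,s)|^2ds=0$ for each $t$. $\tilde G(t,s)=2\varrho\mathbb 1_{\{s<t\}}+G(t,s)$; $\tilde{\mathbf G}_t$ is the integral operator with kernel $\tilde G(s,u)\mathbb 1_{\{u\ge t\}}$, i.e. $(\tilde{\mathbf G}_tf)(s)=\int_0^T\tilde G(s,u)\mathbb 1_{\{u\ge t\}}f(u)du$; $\mathbf 1_t$ is the integral operator $(\mathbf 1_tf)(u)=\int_0^T\mathbb 1_{\{u\ge s\}}\mathbb 1_{\{s\ge t\}}f(s)ds$; ${}^*$ denotes the $L^2$-adjoint; ${\rm id}$ is the identity. Positive definite means $\langle\mathbf D_tf,f\rangle>0$ for all nonzero $f$. *)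

theory Defs
  imports "HOL-Analysis.Analysis"
begin

abbreviation LT :: "real \<Rightarrow> real measure" where
  "LT T \<equiv> lebesgue_on {0..T}"

text \<open>L^2([0,T],R): measurable, square-integrable real functions (elements are
  representatives; equality in L^2 is almost-everywhere equality).\<close>
definition L2 :: "real \<Rightarrow> (real \<Rightarrow> real) set" where
  "L2 T = {f. f \<in> borel_measurable (LT T) \<and> integrable (LT T) (\<lambda>x. (f x)\<^sup>2)}"

definition inner_L2 :: "real \<Rightarrow> (real \<Rightarrow> real) \<Rightarrow> (real \<Rightarrow> real) \<Rightarrow> real" where
  "inner_L2 T f g = (\<integral>x. f x * g x \<partial>LT T)"

definition norm_L2 :: "real \<Rightarrow> (real \<Rightarrow> real) \<Rightarrow> real" where
  "norm_L2 T f = sqrt (\<integral>x. (f x)\<^sup>2 \<partial>LT T)"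

definition volterra :: "real \<Rightarrow> (real \<Rightarrow> real \<Rightarrow> real) \<Rightarrow> bool" where
  "volterra T G \<longleftrightarrow> (\<forall>t\<in>{0..T}. \<forall>s\<in>{0..T}. s \<ge> t \<longrightarrow> G t s = 0)"

definition nonneg_definite :: "real \<Rightarrow> (real \<Rightarrow> real \<Rightarrow> real) \<Rightarrow> bool" where
  "nonneg_definite T G \<longleftrightarrow>
     (\<forall>f\<in>L2 T. (\<integral>t. (\<integral>s. (G t s + G s t) * f s * f t \<partial>LT T) \<partial>LT T) \<ge> 0)"

definition kernel_class :: "real \<Rightarrow> (real \<Rightarrow> real \<Rightarrow> real) \<Rightarrow> bool" where
  "kernel_class T G \<longleftrightarrow>
     (\<lambda>(t, s). G t s) \<in> borel_measurable (lebesgue_on ({0..T} \<times> {0..T})) \<and>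
     (\<forall>t\<in>{0..T}. \<forall>s\<in>{0..T}. G t s \<ge> 0) \<and>
     volterra T G \<and> nonneg_definite T G \<and>
     (\<exists>C::real. (\<forall>t\<in>{0..T}. (\<integral>\<^sup>+ s. ennreal ((G t s)\<^sup>2) \<partial>LT T) \<le> ennreal C) \<and>
                (\<forall>s\<in>{0..T}. (\<integral>\<^sup>+ t. ennreal ((G t s)\<^sup>2) \<partial>LT T) \<le> ennreal C)) \<and>
     (\<forall>t\<in>{0..T}. ((\<lambda>u. \<integral>\<^sup>+ s. ennreal ((G u s - G t s)\<^sup>2) \<partial>LT T) \<longlongrightarrow> 0)
                     (at t within {0..T}))"

definition kop :: "real \<Rightarrow> (real \<Rightarrow> real \<Rightarrow> real) \<Rightarrow> (real \<Rightarrow> real) \<Rightarrow> (real \<Rightarrow> real)" where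
  "kop T K f = (\<lambda>x. \<integral>y. K x y * f y \<partial>LT T)"

definition kadj :: "(real \<Rightarrow> real \<Rightarrow> real) \<Rightarrow> (real \<Rightarrow> real \<Rightarrow> real)" where
  "kadj K = (\<lambda>x y. K y x)"

definition Gtilde :: "real \<Rightarrow> (real \<Rightarrow> real \<Rightarrow> real) \<Rightarrow> real \<Rightarrow> real \<Rightarrow> real" where
  "Gtilde \<rho> G t s = 2 * \<rho> * (if s < t then 1 else 0) + G t s"

definition Gt_kernel :: "real \<Rightarrow> (real \<Rightarrow> real \<Rightarrow> real) \<Rightarrow> real \<Rightarrow> real \<Rightarrow> real \<Rightarrow> real" where
  "Gt_kernel \<rho> G t = (\<lambda>s u. Gtilde \<rho> G s u * (if u \<ge> t then 1 else 0))"

definition one_kernel :: "real \<Rightarrow> real \<Rightarrow> real \<Rightarrow> real" where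
  "one_kernel t = (\<lambda>u s. (if u \<ge> s then 1 else 0) * (if s \<ge> t then 1 else 0))"

definition D_op :: "real \<Rightarrow> real \<Rightarrow> real \<Rightarrow> real \<Rightarrow> (real \<Rightarrow> real \<Rightarrow> real) \<Rightarrow> real
                     \<Rightarrow> (real \<Rightarrow> real) \<Rightarrow> (real \<Rightarrow> real)" where
  "D_op T lam \<rho> \<phi> G t f = (\<lambda>x. 2 * lam * f x
      + kop T (Gt_kernel \<rho> G t) f x
      + kop T (kadj (Gt_kernel \<rho> G t)) f x
      + 2 * \<phi> * kop T (kadj (one_kernel t)) (kop T (one_kernel t) f) x)"

end

(*
  Write D_t = 2 lam id + A + adj A + 2 phi (adj B) B, where A is the integral operator with
  kernel Gtilde(s,u) 1{u >= t} and B = 1_t.  Cutting f off below t costs nothing because G is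
  Volterra, and then <A f + adj A f, f> = rho (int g)^2 + <G g + adj G g, g> with g = f 1{. >= t};
  both terms are nonnegative, so <D_t f, f> >= 2 lam |f|^2, while Fubini makes D_t self-adjoint.
  A bounded operator with <D f, f> >= a |f|^2 is injective with bounded inverse, and also
  surjective: for c = a / M^2 the residual map r |-> r - c D r contracts by sqrt (1 - (a/M)^2),
  so the Richardson iteration for D f = g is an absolutely summable series, which converges in L^2.
  Since G is only measurable for the completed product measure, everything is done for a Borel
  kernel that agrees with G almost everywhere along almost every row and column.
*)
theory Submission
  imports Defs
begin

section \<open>Square-integrable functions on $[0,T]$\<close>

interpretation LT: finite_measure "LT T" for T
  by (rule finite_measure_lebesgue_on) auto

lemma L2_borel_measurable [measurable_dest]: "f \<in> L2 T \<Longrightarrow> f \<in> borel_measurable (LT T)"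
  by (simp add: L2_def)

lemma L2_integrable_square: "f \<in> L2 T \<Longrightarrow> integrable (LT T) (\<lambda>x. (f x)\<^sup>2)"
  by (simp add: L2_def)

lemma L2I: "f \<in> borel_measurable (LT T) \<Longrightarrow> integrable (LT T) (\<lambda>x. (f x)\<^sup>2) \<Longrightarrow> f \<in> L2 T"
  by (simp add: L2_def)

lemma borel_measurable_LT_id [measurable]: "(\<lambda>x. x) \<in> borel_measurable (LT T)"
  using id_borel_measurable_lebesgue_on by (simp add: id_def)

lemma AE_LT_space: "AE x in LT T. x \<in> {0..T}"
  by (metis AE_space space_lebesgue_on)

lemma AE_LT_if_AE_lborel: "AE x in lborel. P x \<Longrightarrow> AE x in LT T. P x"
  by (simp add: AE_restrict_space_iff AE_completion eventually_mono)

lemma abs_mult_le_sum_squares: "\<bar>x * y\<bar> \<le> x\<^sup>2 + (y::real)\<^sup>2"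
proof -
  have "2 * (\<bar>x\<bar> * \<bar>y\<bar>) \<le> x\<^sup>2 + y\<^sup>2"
    using sum_squares_bound[of "\<bar>x\<bar>" "\<bar>y\<bar>"] by (simp add: mult.assoc)
  moreover have "0 \<le> \<bar>x\<bar> * \<bar>y\<bar>" by simp
  ultimately show ?thesis unfolding abs_mult by linarith
qed

lemma integrable_mult_L2:
  assumes "f \<in> L2 T" "g \<in> L2 T"
  shows "integrable (LT T) (\<lambda>x. f x * g x)"
proof (rule Bochner_Integration.integrable_bound)
  show "integrable (LT T) (\<lambda>x. (f x)\<^sup>2 + (g x)\<^sup>2)"
    using assms by (auto intro: L2_integrable_square)
  show "AE x in LT T. norm (f x * g x) \<le> norm ((f x)\<^sup>2 + (g x)\<^sup>2)"
    by (intro AE_I2) (simp add: abs_mult_le_sum_squares)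
qed (use assms in measurable)

lemma integrable_L2: "f \<in> L2 T \<Longrightarrow> integrable (LT T) f"
  by (rule LT.square_integrable_imp_integrable) (auto intro: L2_integrable_square)

lemma L2_scale: assumes "f \<in> L2 T" shows "(\<lambda>x. c * f x) \<in> L2 T"
proof (rule L2I)
  show "integrable (LT T) (\<lambda>x. (c * f x)\<^sup>2)"
    using L2_integrable_square[OF assms] by (simp add: power_mult_distrib)
qed (use assms in measurable)

lemma L2_add: assumes "f \<in> L2 T" "g \<in> L2 T" shows "(\<lambda>x. f x + g x) \<in> L2 T"
proof (rule L2I)
  have "integrable (LT T) (\<lambda>x. (f x)\<^sup>2 + (g x)\<^sup>2 + 2 * f x * g x)"
    using assms by (intro Bochner_Integration.integrable_add L2_integrable_square integrable_mult_L2 L2_scale)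
  then show "integrable (LT T) (\<lambda>x. (f x + g x)\<^sup>2)"
    by (simp add: power2_sum)
qed (use assms in measurable)

lemma L2_diff: "f \<in> L2 T \<Longrightarrow> g \<in> L2 T \<Longrightarrow> (\<lambda>x. f x - g x) \<in> L2 T"
  using L2_add[of f T "\<lambda>x. -1 * g x"] L2_scale[of g T "-1"] by simp

lemma L2_zero: "(\<lambda>x. 0) \<in> L2 T"
  by (rule L2I) auto

lemma L2_sum: "(\<And>i. i \<in> I \<Longrightarrow> u i \<in> L2 T) \<Longrightarrow> (\<lambda>x. \<Sum>i\<in>I. u i x) \<in> L2 T"
  by (induction I rule: infinite_finite_induct) (auto simp: L2_zero L2_add)

lemma L2_cut: "f \<in> L2 T \<Longrightarrow> (\<lambda>x. f x * (if t \<le> x then 1 else 0)) \<in> L2 T"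
proof (rule L2I)
  assume f: "f \<in> L2 T"
  show m: "(\<lambda>x. f x * (if t \<le> x then 1 else 0)) \<in> borel_measurable (LT T)"
    using f by measurable
  show "integrable (LT T) (\<lambda>x. (f x * (if t \<le> x then 1 else 0))\<^sup>2)"
    using L2_integrable_square[OF f] by (rule Bochner_Integration.integrable_bound) (use m in auto)
qed

lemma borel_measurable_LT_AE_cong:
  fixes f g :: "real \<Rightarrow> real"
  assumes f: "f \<in> borel_measurable (LT T)" and ae: "AE x in LT T. f x = g x"
  shows "g \<in> borel_measurable (LT T)"
proof -
  have S: "{0..T} \<in> sets lebesgue" by simp
  have "(\<lambda>x. if x \<in> {0..T} then f x else 0) \<in> borel_measurable lebesgue"
    using borel_measurable_if[OF S] f by blast
  moreover have "AE x in lebesgue. (if x \<in> {0..T} then f x else 0) = (if x \<in> {0..T} then g x else 0)"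
    using ae by (simp add: AE_restrict_space_iff)
  ultimately have "(\<lambda>x. if x \<in> {0..T} then g x else 0) \<in> borel_measurable lebesgue"
    by (rule borel_measurable_AE)
  then show ?thesis using borel_measurable_if[OF S] by blast
qed

lemma integral_LT_AE_cong:
  fixes f g :: "real \<Rightarrow> real"
  assumes "f \<in> borel_measurable (LT T)" "AE x in LT T. f x = g x"
  shows "integral\<^sup>L (LT T) f = integral\<^sup>L (LT T) g"
  by (rule integral_cong_AE[OF assms(1) borel_measurable_LT_AE_cong[OF assms] assms(2)])

lemma L2_AE_cong: assumes "f \<in> L2 T" "AE x in LT T. f x = g x" shows "g \<in> L2 T"
proof (rule L2I)
  show g: "g \<in> borel_measurable (LT T)"
    by (rule borel_measurable_LT_AE_cong[OF L2_borel_measurable[OF assms(1)] assms(2)])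
  show "integrable (LT T) (\<lambda>x. (g x)\<^sup>2)"
  proof (rule integrable_cong_AE_imp[OF L2_integrable_square[OF assms(1)]])
    show "AE x in LT T. (f x)\<^sup>2 = (g x)\<^sup>2"
      using assms(2) by eventually_elim simp
  qed (use g in measurable)
qed

lemma norm_L2_nonneg: "0 \<le> norm_L2 T f"
  by (simp add: norm_L2_def)

lemma norm_L2_square: "(norm_L2 T f)\<^sup>2 = (\<integral>x. (f x)\<^sup>2 \<partial>LT T)"
  by (simp add: norm_L2_def integral_nonneg_AE)

lemma inner_L2_self: "inner_L2 T f f = (norm_L2 T f)\<^sup>2"
  unfolding inner_L2_def norm_L2_square by (simp add: power2_eq_square)

lemma inner_L2_commute: "inner_L2 T f g = inner_L2 T g f"
  by (simp add: inner_L2_def mult.commute)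

lemma inner_L2_AE_cong:
  assumes "f \<in> L2 T" "g \<in> L2 T" "AE x in LT T. f x = f' x"
  shows "inner_L2 T f' g = inner_L2 T f g"
proof -
  have "AE x in LT T. f x * g x = f' x * g x"
    using assms(3) by eventually_elim simp
  then show ?thesis
    unfolding inner_L2_def
    by (rule integral_LT_AE_cong[OF borel_measurable_integrable[OF integrable_mult_L2[OF assms(1,2)]], symmetric])
qed

lemma norm_L2_AE_cong:
  assumes "f \<in> L2 T" "AE x in LT T. f x = g x"
  shows "norm_L2 T g = norm_L2 T f"
proof -
  have "AE x in LT T. (f x)\<^sup>2 = (g x)\<^sup>2"
    using assms(2) by eventually_elim simp
  then show ?thesis
    unfolding norm_L2_def
    by (rule integral_LT_AE_cong[OF borel_measurable_integrable[OF L2_integrable_square[OF assms(1)]],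
          THEN arg_cong, symmetric])
qed

lemma norm_L2_eq_0_iff: "f \<in> L2 T \<Longrightarrow> norm_L2 T f = 0 \<longleftrightarrow> (AE x in LT T. f x = 0)"
  using integral_nonneg_eq_0_iff_AE[OF L2_integrable_square, of f T]
  by (simp add: norm_L2_def)

lemma inner_L2_add_left:
  "f \<in> L2 T \<Longrightarrow> g \<in> L2 T \<Longrightarrow> h \<in> L2 T \<Longrightarrow>
   inner_L2 T (\<lambda>x. f x + g x) h = inner_L2 T f h + inner_L2 T g h"
  by (simp add: inner_L2_def distrib_right integrable_mult_L2)

lemma inner_L2_scale_left: "inner_L2 T (\<lambda>x. c * f x) h = c * inner_L2 T f h"
  by (simp add: inner_L2_def mult.assoc)

lemma norm_L2_scale: "norm_L2 T (\<lambda>x. c * f x) = \<bar>c\<bar> * norm_L2 T f"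
  by (simp add: norm_L2_def power_mult_distrib real_sqrt_mult)

lemma inner_L2_le_norm:
  assumes f: "f \<in> L2 T" and g: "g \<in> L2 T"
  shows "inner_L2 T f g \<le> norm_L2 T f * norm_L2 T g"
proof (cases "norm_L2 T f = 0 \<or> norm_L2 T g = 0")
  case True
  then have "(AE x in LT T. f x = 0) \<or> (AE x in LT T. g x = 0)"
    using f g by (simp add: norm_L2_eq_0_iff)
  then have "AE x in LT T. f x * g x = 0"
    by (auto elim: eventually_mono)
  then have "inner_L2 T f g = (\<integral>x. 0 \<partial>LT T)"
    unfolding inner_L2_def
    by (rule integral_LT_AE_cong[OF borel_measurable_integrable[OF integrable_mult_L2[OF f g]]])
  then show ?thesis using norm_L2_nonneg[of T f] norm_L2_nonneg[of T g] by simp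
next
  case False
  define a where "a = norm_L2 T f"
  define b where "b = norm_L2 T g"
  have "0 < a" "0 < b"
    using False norm_L2_nonneg[of T f] norm_L2_nonneg[of T g] by (auto simp: a_def b_def)
  have "0 \<le> (\<integral>x. (b * f x - a * g x)\<^sup>2 \<partial>LT T)" by simp
  also have "\<dots> = (\<integral>x. b\<^sup>2 * (f x)\<^sup>2 - 2 * a * b * (f x * g x) + a\<^sup>2 * (g x)\<^sup>2 \<partial>LT T)"
    by (intro Bochner_Integration.integral_cong refl) (simp add: power2_eq_square algebra_simps)
  also have "\<dots> = b\<^sup>2 * (\<integral>x. (f x)\<^sup>2 \<partial>LT T) - 2 * a * b * inner_L2 T f g + a\<^sup>2 * (\<integral>x. (g x)\<^sup>2 \<partial>LT T)"
    using f g by (simp add: inner_L2_def L2_integrable_square integrable_mult_L2)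
  also have "\<dots> = 2 * a * b * (a * b - inner_L2 T f g)"
    unfolding norm_L2_square[symmetric] a_def[symmetric] b_def[symmetric]
    by (simp add: power2_eq_square algebra_simps)
  finally have "0 \<le> (2 * a * b) * (a * b - inner_L2 T f g)" .
  moreover have "0 < 2 * a * b"
    using \<open>0 < a\<close> \<open>0 < b\<close> by simp
  ultimately show ?thesis
    by (simp add: a_def b_def zero_le_mult_iff)
qed

lemma abs_inner_L2_le_norm:
  assumes "f \<in> L2 T" "g \<in> L2 T"
  shows "\<bar>inner_L2 T f g\<bar> \<le> norm_L2 T f * norm_L2 T g"
proof -
  have "(\<lambda>x. - f x) \<in> L2 T"
    using L2_scale[OF assms(1), of "-1"] by simp
  then have "inner_L2 T (\<lambda>x. - f x) g \<le> norm_L2 T (\<lambda>x. - f x) * norm_L2 T g"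
    using assms(2) by (rule inner_L2_le_norm)
  then have "- inner_L2 T f g \<le> norm_L2 T f * norm_L2 T g"
    by (simp add: inner_L2_def norm_L2_def)
  then show ?thesis
    using inner_L2_le_norm[OF assms] by linarith
qed

lemma integral_abs_mult_le_norm_L2:
  assumes "f \<in> L2 T" "g \<in> L2 T"
  shows "(\<integral>x. \<bar>f x * g x\<bar> \<partial>LT T) \<le> norm_L2 T f * norm_L2 T g"
proof -
  have "(\<lambda>x. \<bar>f x\<bar>) \<in> L2 T" "(\<lambda>x. \<bar>g x\<bar>) \<in> L2 T"
    using assms by (auto simp: L2_def)
  from inner_L2_le_norm[OF this] show ?thesis
    by (simp add: inner_L2_def norm_L2_def abs_mult)
qed

lemma norm_L2_add_le:
  assumes f: "f \<in> L2 T" and g: "g \<in> L2 T"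
  shows "norm_L2 T (\<lambda>x. f x + g x) \<le> norm_L2 T f + norm_L2 T g"
proof (rule power2_le_imp_le)
  have "(norm_L2 T (\<lambda>x. f x + g x))\<^sup>2 = (\<integral>x. (f x)\<^sup>2 + 2 * (f x * g x) + (g x)\<^sup>2 \<partial>LT T)"
    unfolding norm_L2_square by (simp add: power2_sum algebra_simps)
  also have "\<dots> = (norm_L2 T f)\<^sup>2 + 2 * inner_L2 T f g + (norm_L2 T g)\<^sup>2"
    using f g by (simp add: norm_L2_square inner_L2_def L2_integrable_square integrable_mult_L2)
  also have "\<dots> \<le> (norm_L2 T f + norm_L2 T g)\<^sup>2"
    using inner_L2_le_norm[OF f g] by (simp add: power2_sum)
  finally show "(norm_L2 T (\<lambda>x. f x + g x))\<^sup>2 \<le> (norm_L2 T f + norm_L2 T g)\<^sup>2" .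
qed (simp add: norm_L2_nonneg add_nonneg_nonneg)

lemma norm_L2_diff_le:
  "f \<in> L2 T \<Longrightarrow> g \<in> L2 T \<Longrightarrow> norm_L2 T (\<lambda>x. f x - g x) \<le> norm_L2 T f + norm_L2 T g"
  using norm_L2_add_le[OF _ L2_scale, of f T g "-1"] norm_L2_scale[of T "-1" g] by simp

lemma norm_L2_diff_scale_square:
  assumes "f \<in> L2 T" "g \<in> L2 T"
  shows "(norm_L2 T (\<lambda>x. f x - c * g x))\<^sup>2
    = (norm_L2 T f)\<^sup>2 - 2 * c * inner_L2 T g f + c\<^sup>2 * (norm_L2 T g)\<^sup>2"
proof -
  have "(norm_L2 T (\<lambda>x. f x - c * g x))\<^sup>2
      = (\<integral>x. (f x)\<^sup>2 - 2 * c * (g x * f x) + c\<^sup>2 * (g x)\<^sup>2 \<partial>LT T)"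
    unfolding norm_L2_square
    by (intro Bochner_Integration.integral_cong refl) (simp add: power2_eq_square algebra_simps)
  also have "\<dots> = (norm_L2 T f)\<^sup>2 - 2 * c * inner_L2 T g f + c\<^sup>2 * (norm_L2 T g)\<^sup>2"
    using assms by (simp add: norm_L2_square inner_L2_def L2_integrable_square integrable_mult_L2)
  finally show ?thesis .
qed

lemma bounded_measurable_L2:
  assumes g[measurable]: "g \<in> borel_measurable (LT T)" and "0 \<le> B"
    and B: "\<And>x. x \<in> {0..T} \<Longrightarrow> \<bar>g x\<bar> \<le> B"
  shows "g \<in> L2 T" "norm_L2 T g \<le> B * sqrt (measure (LT T) {0..T})"
proof -
  have sq: "(g x)\<^sup>2 \<le> B\<^sup>2" if "x \<in> {0..T}" for x
    using B[OF that] by (metis abs_ge_zero power2_abs power_mono)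
  have i: "integrable (LT T) (\<lambda>x. (g x)\<^sup>2)"
  proof (rule LT.integrable_const_bound)
    show "AE x in LT T. norm ((g x)\<^sup>2) \<le> B\<^sup>2"
      using AE_LT_space by eventually_elim (simp add: sq)
  qed measurable
  then show "g \<in> L2 T"
    using g by (rule L2I[rotated])
  have "(\<integral>x. (g x)\<^sup>2 \<partial>LT T) \<le> (\<integral>x. B\<^sup>2 \<partial>LT T)"
    by (rule integral_mono[OF i]) (auto simp: sq)
  then have "(norm_L2 T g)\<^sup>2 \<le> (B * sqrt (measure (LT T) {0..T}))\<^sup>2"
    by (simp add: norm_L2_square power_mult_distrib mult.commute)
  then show "norm_L2 T g \<le> B * sqrt (measure (LT T) {0..T})"
    by (rule power2_le_imp_le) (use \<open>0 \<le> B\<close> in simp)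
qed

section \<open>Absolutely summable series in $L^2$\<close>

lemma power2_suminf_ennreal: "(\<Sum>n. A n :: ennreal)\<^sup>2 = (\<Sum>n. \<Sum>m. A n * A m)"
  by (simp add: power2_eq_square)

lemma nn_integral_suminf_abs_square_le:
  assumes v: "\<And>n. v n \<in> L2 T"
  shows "(\<integral>\<^sup>+x. (\<Sum>n. ennreal \<bar>v n x\<bar>)\<^sup>2 \<partial>LT T) \<le> (\<Sum>n. ennreal (norm_L2 T (v n)))\<^sup>2"
proof -
  have [measurable]: "\<And>n. v n \<in> borel_measurable (LT T)"
    using v by (rule L2_borel_measurable)
  have pairwise: "(\<integral>\<^sup>+x. ennreal \<bar>v n x\<bar> * ennreal \<bar>v m x\<bar> \<partial>LT T)
      \<le> ennreal (norm_L2 T (v n)) * ennreal (norm_L2 T (v m))" for n m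
  proof -
    have "(\<integral>\<^sup>+x. ennreal \<bar>v n x\<bar> * ennreal \<bar>v m x\<bar> \<partial>LT T) = (\<integral>\<^sup>+x. ennreal \<bar>v n x * v m x\<bar> \<partial>LT T)"
      by (simp add: abs_mult ennreal_mult)
    also have "\<dots> = ennreal (\<integral>x. \<bar>v n x * v m x\<bar> \<partial>LT T)"
      using integrable_mult_L2[OF v v] by (intro nn_integral_eq_integral) auto
    also have "\<dots> \<le> ennreal (norm_L2 T (v n) * norm_L2 T (v m))"
      by (intro ennreal_leI integral_abs_mult_le_norm_L2 v)
    finally show ?thesis
      by (simp add: ennreal_mult norm_L2_nonneg)
  qed
  have "(\<integral>\<^sup>+x. (\<Sum>n. ennreal \<bar>v n x\<bar>)\<^sup>2 \<partial>LT T)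
      = (\<integral>\<^sup>+x. (\<Sum>n. \<Sum>m. ennreal \<bar>v n x\<bar> * ennreal \<bar>v m x\<bar>) \<partial>LT T)"
    by (subst power2_suminf_ennreal) (rule refl)
  also have "\<dots> = (\<Sum>n. \<Sum>m. \<integral>\<^sup>+x. ennreal \<bar>v n x\<bar> * ennreal \<bar>v m x\<bar> \<partial>LT T)"
    by (subst nn_integral_suminf, measurable, intro suminf_cong nn_integral_suminf, measurable)
  also have "\<dots> \<le> (\<Sum>n. \<Sum>m. ennreal (norm_L2 T (v n)) * ennreal (norm_L2 T (v m)))"
    by (intro suminf_le summableI pairwise)
  also have "\<dots> = (\<Sum>n. ennreal (norm_L2 T (v n)))\<^sup>2"
    by (rule power2_suminf_ennreal[symmetric])
  finally show ?thesis .
qed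

lemma nn_integral_suminf_abs_square_bound:
  assumes u: "\<And>n. u n \<in> L2 T" and s: "summable (\<lambda>n. norm_L2 T (u n))"
  shows "(\<integral>\<^sup>+x. (\<Sum>n. ennreal \<bar>u n x\<bar>)\<^sup>2 \<partial>LT T) \<le> ennreal ((\<Sum>n. norm_L2 T (u n))\<^sup>2)"
proof -
  have "(\<integral>\<^sup>+x. (\<Sum>n. ennreal \<bar>u n x\<bar>)\<^sup>2 \<partial>LT T) \<le> (\<Sum>n. ennreal (norm_L2 T (u n)))\<^sup>2"
    using u by (rule nn_integral_suminf_abs_square_le)
  also have "\<dots> = ennreal ((\<Sum>n. norm_L2 T (u n))\<^sup>2)"
    using s by (simp add: suminf_ennreal2 norm_L2_nonneg suminf_nonneg ennreal_power)
  finally show ?thesis .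
qed

lemma AE_summable_abs_L2:
  assumes u: "\<And>n. u n \<in> L2 T" and s: "summable (\<lambda>n. norm_L2 T (u n))"
  shows "AE x in LT T. summable (\<lambda>n. \<bar>u n x\<bar>)"
proof -
  have [measurable]: "\<And>n. u n \<in> borel_measurable (LT T)"
    using u by (rule L2_borel_measurable)
  have "AE x in LT T. (\<Sum>n. ennreal \<bar>u n x\<bar>)\<^sup>2 \<noteq> \<infinity>"
    using nn_integral_suminf_abs_square_bound[OF u s] by (intro nn_integral_PInf_AE) (auto simp: top_unique)
  then show ?thesis
    by eventually_elim (auto simp: power2_eq_square ennreal_mult_eq_top_iff intro: summable_suminf_not_top)
qed

lemma L2_suminf:
  assumes u: "\<And>n. u n \<in> L2 T" and s: "summable (\<lambda>n. norm_L2 T (u n))"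
  shows "(\<lambda>x. \<Sum>n. u n x) \<in> L2 T" and "norm_L2 T (\<lambda>x. \<Sum>n. u n x) \<le> (\<Sum>n. norm_L2 T (u n))"
proof -
  have [measurable]: "\<And>n. u n \<in> borel_measurable (LT T)"
    using u by (rule L2_borel_measurable)
  define N where "N = (\<Sum>n. norm_L2 T (u n))"
  define F where "F x = (\<Sum>n. u n x)" for x
  have [measurable]: "F \<in> borel_measurable (LT T)"
    unfolding F_def by measurable
  have "AE x in LT T. ennreal ((F x)\<^sup>2) \<le> (\<Sum>n. ennreal \<bar>u n x\<bar>)\<^sup>2"
    using AE_summable_abs_L2[OF u s]
  proof eventually_elim
    case (elim x)
    have "\<bar>F x\<bar> \<le> (\<Sum>n. \<bar>u n x\<bar>)"
      unfolding F_def using elim by (rule summable_rabs)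
    then have "(F x)\<^sup>2 \<le> (\<Sum>n. \<bar>u n x\<bar>)\<^sup>2"
      by (metis abs_ge_zero power2_abs power_mono)
    then show ?case
      using elim by (simp add: suminf_ennreal2 ennreal_power suminf_nonneg ennreal_leI)
  qed
  from order_trans[OF nn_integral_mono_AE[OF this] nn_integral_suminf_abs_square_bound[OF u s]]
  have F2: "(\<integral>\<^sup>+x. ennreal ((F x)\<^sup>2) \<partial>LT T) \<le> ennreal (N\<^sup>2)"
    by (simp add: N_def)
  then have "integrable (LT T) (\<lambda>x. (F x)\<^sup>2)"
    using le_less_trans[OF F2 ennreal_less_top] by (simp add: integrable_iff_bounded)
  then show "(\<lambda>x. \<Sum>n. u n x) \<in> L2 T"
    unfolding F_def[symmetric] by (intro L2I) measurable
  have "(\<integral>x. (F x)\<^sup>2 \<partial>LT T) = enn2real (\<integral>\<^sup>+x. ennreal ((F x)\<^sup>2) \<partial>LT T)"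
    by (rule integral_eq_nn_integral) auto
  also have "\<dots> \<le> N\<^sup>2"
    using enn2real_mono[OF F2] by simp
  finally have "(\<integral>x. (F x)\<^sup>2 \<partial>LT T) \<le> N\<^sup>2" .
  moreover have "0 \<le> N"
    using s by (simp add: N_def suminf_nonneg norm_L2_nonneg)
  ultimately have "norm_L2 T F \<le> N"
    unfolding norm_L2_def by (intro real_le_lsqrt)
  then show "norm_L2 T (\<lambda>x. \<Sum>n. u n x) \<le> (\<Sum>n. norm_L2 T (u n))"
    by (simp only: F_def[abs_def] N_def)
qed

lemma L2_series_converges:
  assumes u: "\<And>n. u n \<in> L2 T" and s: "summable (\<lambda>n. norm_L2 T (u n))"
  shows "(\<lambda>N. norm_L2 T (\<lambda>x. (\<Sum>n. u n x) - (\<Sum>n<N. u n x))) \<longlonglongrightarrow> 0"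
proof (rule Lim_null_comparison)
  show "(\<lambda>N. \<Sum>n. norm_L2 T (u (n + N))) \<longlonglongrightarrow> 0"
    using s by (rule suminf_exist_split2)
  show "\<forall>\<^sub>F N in sequentially. norm (norm_L2 T (\<lambda>x. (\<Sum>n. u n x) - (\<Sum>n<N. u n x)))
      \<le> (\<Sum>n. norm_L2 T (u (n + N)))"
  proof (intro always_eventually allI)
    fix N
    have sN: "summable (\<lambda>n. norm_L2 T (u (n + N)))"
      using s by (rule summable_ignore_initial_segment)
    have "AE x in LT T. (\<Sum>n. u (n + N) x) = (\<Sum>n. u n x) - (\<Sum>n<N. u n x)"
      using AE_summable_abs_L2[OF u s]
      by eventually_elim (rule suminf_minus_initial_segment[OF summable_rabs_cancel])
    then have "norm_L2 T (\<lambda>x. (\<Sum>n. u n x) - (\<Sum>n<N. u n x)) = norm_L2 T (\<lambda>x. \<Sum>n. u (n + N) x)"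
      by (rule norm_L2_AE_cong[OF L2_suminf(1)[OF u sN]])
    also have "\<dots> \<le> (\<Sum>n. norm_L2 T (u (n + N)))"
      by (rule L2_suminf(2)[OF u sN])
    finally show "norm (norm_L2 T (\<lambda>x. (\<Sum>n. u n x) - (\<Sum>n<N. u n x)))
      \<le> (\<Sum>n. norm_L2 T (u (n + N)))"
      by (simp add: norm_L2_nonneg)
  qed
qed

section \<open>Coercive operators are invertible\<close>

locale coercive_L2_operator =
  fixes T :: real and D :: "(real \<Rightarrow> real) \<Rightarrow> real \<Rightarrow> real" and a :: real
  assumes maps_L2: "f \<in> L2 T \<Longrightarrow> D f \<in> L2 T"
    and bounded: "\<exists>M. \<forall>f\<in>L2 T. norm_L2 T (D f) \<le> M * norm_L2 T f"
    and linear: "f \<in> L2 T \<Longrightarrow> g \<in> L2 T \<Longrightarrow>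
      AE x in LT T. D (\<lambda>y. \<alpha> * f y + \<beta> * g y) x = \<alpha> * D f x + \<beta> * D g x"
    and coercive: "f \<in> L2 T \<Longrightarrow> a * (norm_L2 T f)\<^sup>2 \<le> inner_L2 T (D f) f"
    and coercivity_pos: "0 < a"
begin

lemma positive_definite: "f \<in> L2 T \<Longrightarrow> \<not> (AE x in LT T. f x = 0) \<Longrightarrow> 0 < inner_L2 T (D f) f"
  using coercive[of f] coercivity_pos norm_L2_nonneg[of T f] norm_L2_eq_0_iff[of f T]
  by (smt (verit) mult_pos_pos zero_less_power)

lemma norm_image_ge: assumes f: "f \<in> L2 T" shows "a * norm_L2 T f \<le> norm_L2 T (D f)"
proof (cases "norm_L2 T f = 0")
  case False
  have "a * (norm_L2 T f)\<^sup>2 \<le> norm_L2 T (D f) * norm_L2 T f"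
    using coercive[OF f] inner_L2_le_norm[OF maps_L2[OF f] f] by linarith
  with False norm_L2_nonneg[of T f] show ?thesis
    by (simp add: power2_eq_square)
qed (simp add: norm_L2_nonneg)

lemma inverse_bounded: "\<exists>C. \<forall>f\<in>L2 T. norm_L2 T f \<le> C * norm_L2 T (D f)"
proof (intro exI ballI)
  fix f assume "f \<in> L2 T"
  then show "norm_L2 T f \<le> (1 / a) * norm_L2 T (D f)"
    using norm_image_ge coercivity_pos by (simp add: field_simps)
qed

lemma injective:
  assumes f: "f \<in> L2 T" and Df: "AE x in LT T. D f x = 0"
  shows "AE x in LT T. f x = 0"
proof -
  have "norm_L2 T (D f) = 0"
    using Df by (simp add: norm_L2_eq_0_iff maps_L2[OF f])
  then have "norm_L2 T f = 0"
    using norm_image_ge[OF f] coercivity_pos norm_L2_nonneg[of T f] by (simp add: mult_le_0_iff)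
  then show ?thesis
    using f by (simp add: norm_L2_eq_0_iff)
qed

lemma D_zero: "AE x in LT T. D (\<lambda>y. 0) x = 0"
  using linear[OF L2_zero L2_zero, of 0 0] by simp

lemma D_add: "f \<in> L2 T \<Longrightarrow> g \<in> L2 T \<Longrightarrow> AE x in LT T. D (\<lambda>y. f y + g y) x = D f x + D g x"
  using linear[of f g 1 1] by simp

lemma bounded_by_ge_a:
  obtains M where "a \<le> M" "\<And>f. f \<in> L2 T \<Longrightarrow> norm_L2 T (D f) \<le> M * norm_L2 T f"
proof -
  obtain M where M: "\<And>f. f \<in> L2 T \<Longrightarrow> norm_L2 T (D f) \<le> M * norm_L2 T f"
    using bounded by blast
  have "norm_L2 T (D f) \<le> max M a * norm_L2 T f" if "f \<in> L2 T" for f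
    using M[OF that] mult_right_mono[OF max.cobounded1 norm_L2_nonneg] by (rule order_trans)
  then show ?thesis
    using that[of "max M a"] by simp
qed

text \<open>\<open>residual c g n\<close> is the residual \<open>g - D f\<^sub>n\<close> of the Richardson iteration
  \<open>f\<^sub>n\<^sub>+\<^sub>1 = f\<^sub>n + c (g - D f\<^sub>n)\<close>, \<open>f\<^sub>0 = 0\<close>; hence \<open>f\<^sub>n = c * (\<Sum>k<n. residual c g k)\<close>.\<close>

primrec residual :: "real \<Rightarrow> (real \<Rightarrow> real) \<Rightarrow> nat \<Rightarrow> real \<Rightarrow> real" where
  "residual c g 0 = g"
| "residual c g (Suc n) = (\<lambda>x. residual c g n x - c * D (residual c g n) x)"

lemma residual_L2: "g \<in> L2 T \<Longrightarrow> residual c g n \<in> L2 T"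
  by (induction n) (simp_all add: L2_diff L2_scale maps_L2)

lemma contraction_factor_bounds:
  assumes "a \<le> M"
  shows "0 \<le> sqrt (1 - (a / M)\<^sup>2)" "sqrt (1 - (a / M)\<^sup>2) < 1"
proof -
  have "0 < a / M" "a / M \<le> 1"
    using assms coercivity_pos by auto
  then have "0 < (a / M)\<^sup>2" "(a / M)\<^sup>2 \<le> 1"
    by (auto intro: power_le_one)
  then show "0 \<le> sqrt (1 - (a / M)\<^sup>2)" "sqrt (1 - (a / M)\<^sup>2) < 1"
    by auto
qed

lemma norm_residual_step_le:
  assumes r: "r \<in> L2 T" and "a \<le> M" and M: "\<And>f. f \<in> L2 T \<Longrightarrow> norm_L2 T (D f) \<le> M * norm_L2 T f"
  shows "norm_L2 T (\<lambda>x. r x - (a / M\<^sup>2) * D r x) \<le> sqrt (1 - (a / M)\<^sup>2) * norm_L2 T r"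
proof -
  define c where "c = a / M\<^sup>2"
  define n where "n = norm_L2 T r"
  have "0 < M" "0 \<le> c" "0 \<le> n"
    using \<open>a \<le> M\<close> coercivity_pos by (auto simp: c_def n_def norm_L2_nonneg)
  have q: "0 \<le> 1 - (a / M)\<^sup>2"
    using contraction_factor_bounds(1)[OF \<open>a \<le> M\<close>] by simp
  have "(norm_L2 T (D r))\<^sup>2 \<le> (M * n)\<^sup>2"
    using M[OF r] norm_L2_nonneg[of T "D r"] by (simp add: n_def power_mono)
  then have "(norm_L2 T ((\<lambda>x. r x - c * D r x)))\<^sup>2 \<le> n\<^sup>2 - 2 * c * (a * n\<^sup>2) + c\<^sup>2 * (M * n)\<^sup>2"
    unfolding norm_L2_diff_scale_square[OF r maps_L2[OF r]] n_def
    using coercive[OF r] \<open>0 \<le> c\<close> by (smt (verit) mult_left_mono zero_le_power2)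
  also have "\<dots> = ((1 - (a / M)\<^sup>2) * n\<^sup>2)"
    using \<open>0 < M\<close> by (simp add: c_def field_simps power2_eq_square)
  finally have "(norm_L2 T ((\<lambda>x. r x - c * D r x)))\<^sup>2 \<le> (sqrt (1 - (a / M)\<^sup>2) * n)\<^sup>2"
    using q by (simp add: power_mult_distrib)
  then show ?thesis
    unfolding c_def n_def
    by (rule power2_le_imp_le) (use q \<open>0 \<le> n\<close> n_def in simp)
qed

lemma norm_residual_le:
  assumes g: "g \<in> L2 T" and "a \<le> M" and M: "\<And>f. f \<in> L2 T \<Longrightarrow> norm_L2 T (D f) \<le> M * norm_L2 T f"
  shows "norm_L2 T (residual (a / M\<^sup>2) g n) \<le> sqrt (1 - (a / M)\<^sup>2) ^ n * norm_L2 T g"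
proof (induction n)
  case (Suc n)
  have "norm_L2 T (residual (a / M\<^sup>2) g (Suc n))
      \<le> sqrt (1 - (a / M)\<^sup>2) * norm_L2 T (residual (a / M\<^sup>2) g n)"
    using norm_residual_step_le[OF residual_L2[OF g] \<open>a \<le> M\<close> M] by simp
  also have "\<dots> \<le> sqrt (1 - (a / M)\<^sup>2) * (sqrt (1 - (a / M)\<^sup>2) ^ n * norm_L2 T g)"
    using Suc.IH contraction_factor_bounds(1)[OF \<open>a \<le> M\<close>] by (rule mult_left_mono)
  finally show ?case by simp
qed simp

lemma D_sum_residuals:
  assumes g: "g \<in> L2 T"
  shows "AE x in LT T. c * D (\<lambda>y. \<Sum>k<n. residual c g k y) x = g x - residual c g n x"
proof (induction n)
  case 0
  show ?case using D_zero by eventually_elim simp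
next
  case (Suc n)
  have "AE x in LT T. D (\<lambda>y. (\<Sum>k<n. residual c g k y) + residual c g n y) x
      = D (\<lambda>y. \<Sum>k<n. residual c g k y) x + D (residual c g n) x"
    using g by (intro D_add L2_sum residual_L2)
  with Suc.IH show ?case
    by eventually_elim (simp add: algebra_simps)
qed

lemma D_scaled_minus:
  assumes g: "g \<in> L2 T" and F: "F \<in> L2 T"
  shows "AE x in LT T. D (\<lambda>y. c * F y) x - g x
    = c * D (\<lambda>y. F y - (\<Sum>k<n. residual c g k y)) x - residual c g n x"
proof -
  define S where "S = (\<lambda>y. \<Sum>k<n. residual c g k y)"
  have S: "S \<in> L2 T"
    unfolding S_def using g by (intro L2_sum residual_L2)
  have "(\<lambda>y. c * F y) = (\<lambda>y. c * (F y - S y) + c * S y)"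
    by (simp add: algebra_simps)
  then have "AE x in LT T. D (\<lambda>y. c * F y) x = c * D (\<lambda>y. F y - S y) x + c * D S x"
    using linear[OF L2_diff[OF F S] S] by simp
  with D_sum_residuals[OF g, of c n] show ?thesis
    by eventually_elim (simp add: S_def)
qed

lemma norm_residual_error_le:
  assumes g: "g \<in> L2 T" and F: "F \<in> L2 T" and "0 \<le> c"
    and M: "\<And>f. f \<in> L2 T \<Longrightarrow> norm_L2 T (D f) \<le> M * norm_L2 T f"
  shows "norm_L2 T (\<lambda>x. D (\<lambda>y. c * F y) x - g x)
    \<le> c * M * norm_L2 T (\<lambda>x. F x - (\<Sum>k<n. residual c g k x)) + norm_L2 T (residual c g n)"
proof -
  define w where "w = (\<lambda>x. F x - (\<Sum>k<n. residual c g k x))"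
  have r: "residual c g k \<in> L2 T" for k
    using g by (rule residual_L2)
  have w: "w \<in> L2 T"
    unfolding w_def by (intro L2_diff L2_sum F r)
  have "AE x in LT T. c * D w x - residual c g n x = D (\<lambda>y. c * F y) x - g x"
    using D_scaled_minus[OF g F, of c n] unfolding w_def by eventually_elim simp
  then have "norm_L2 T (\<lambda>x. D (\<lambda>y. c * F y) x - g x) = norm_L2 T (\<lambda>x. c * D w x - residual c g n x)"
    by (rule norm_L2_AE_cong[OF L2_diff[OF L2_scale[OF maps_L2[OF w]] r[of n]]])
  also have "\<dots> \<le> c * norm_L2 T (D w) + norm_L2 T (residual c g n)"
    using norm_L2_diff_le[OF L2_scale[OF maps_L2[OF w], of c] r[of n]] \<open>0 \<le> c\<close>
    by (simp add: norm_L2_scale)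
  also have "\<dots> \<le> c * (M * norm_L2 T w) + norm_L2 T (residual c g n)"
    using M[OF w] \<open>0 \<le> c\<close> by (simp add: mult_left_mono)
  finally show ?thesis
    by (simp add: w_def mult.assoc)
qed

lemma surjective:
  assumes g: "g \<in> L2 T"
  shows "\<exists>f\<in>L2 T. AE x in LT T. D f x = g x"
proof -
  obtain M where "a \<le> M" and M: "\<And>f. f \<in> L2 T \<Longrightarrow> norm_L2 T (D f) \<le> M * norm_L2 T f"
    using bounded_by_ge_a by blast
  define c where "c = a / M\<^sup>2"
  define q where "q = sqrt (1 - (a / M)\<^sup>2)"
  define r where "r = residual c g"
  have "0 \<le> q" "q < 1"
    unfolding q_def using \<open>a \<le> M\<close> by (rule contraction_factor_bounds)+
  have "0 \<le> c"
    using coercivity_pos by (simp add: c_def)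
  have r: "r k \<in> L2 T" for k
    unfolding r_def using g by (rule residual_L2)
  have r_le: "norm_L2 T (r k) \<le> q ^ k * norm_L2 T g" for k
    unfolding r_def c_def q_def using g \<open>a \<le> M\<close> M by (rule norm_residual_le)
  have "summable (\<lambda>k. norm_L2 T (r k))"
    using \<open>0 \<le> q\<close> \<open>q < 1\<close> r_le norm_L2_nonneg
    by (intro summable_comparison_test'[OF summable_mult2[OF summable_geometric]]) auto
  note series = L2_suminf(1)[OF r this] L2_series_converges[OF r this]
  define F where "F = (\<lambda>x. \<Sum>k. r k x)"
  define f where "f = (\<lambda>x. c * F x)"
  have F: "F \<in> L2 T" and f: "f \<in> L2 T"
    unfolding f_def F_def using series(1) by (auto intro: L2_scale)
  have err: "norm_L2 T (\<lambda>x. D f x - g x)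
      \<le> c * M * norm_L2 T (\<lambda>x. F x - (\<Sum>k<n. r k x)) + q ^ n * norm_L2 T g" for n
    using norm_residual_error_le[OF g F \<open>0 \<le> c\<close> M, of n] r_le[of n]
    unfolding f_def r_def by linarith
  have "(\<lambda>n. c * M * norm_L2 T (\<lambda>x. F x - (\<Sum>k<n. r k x)) + q ^ n * norm_L2 T g)
      \<longlonglongrightarrow> c * M * 0 + 0 * norm_L2 T g"
    using \<open>0 \<le> q\<close> \<open>q < 1\<close> unfolding F_def
    by (intro tendsto_intros series LIMSEQ_power_zero) auto
  then have "norm_L2 T (\<lambda>x. D f x - g x) \<le> 0"
    by (intro LIMSEQ_le_const) (use err in auto)
  then have "AE x in LT T. D f x - g x = 0"
    using norm_L2_eq_0_iff[OF L2_diff[OF maps_L2[OF f] g]] norm_L2_nonneg[of T] by (simp add: antisym)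
  then have "AE x in LT T. D f x = g x"
    by eventually_elim simp
  with f show ?thesis by blast
qed

end

lemma coercive_L2_operator_AE_cong:
  assumes "coercive_L2_operator T D a" and ae: "\<And>f. f \<in> L2 T \<Longrightarrow> AE x in LT T. D' f x = D f x"
  shows "coercive_L2_operator T D' a"
proof -
  interpret D: coercive_L2_operator T D a by fact
  have ae': "AE x in LT T. D f x = D' f x" if "f \<in> L2 T" for f
    using ae[OF that] by eventually_elim simp
  show ?thesis
  proof
    show D'_L2: "D' f \<in> L2 T" if "f \<in> L2 T" for f
      by (rule L2_AE_cong[OF D.maps_L2[OF that] ae'[OF that]])
    show "\<exists>M. \<forall>f\<in>L2 T. norm_L2 T (D' f) \<le> M * norm_L2 T f"
      using D.bounded norm_L2_AE_cong[OF D.maps_L2 ae'] by simp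
    show "a * (norm_L2 T f)\<^sup>2 \<le> inner_L2 T (D' f) f" if "f \<in> L2 T" for f
      using D.coercive[OF that] inner_L2_AE_cong[OF D.maps_L2[OF that] that ae'[OF that]] by simp
    show "AE x in LT T. D' (\<lambda>y. \<alpha> * f y + \<beta> * g y) x = \<alpha> * D' f x + \<beta> * D' g x"
      if "f \<in> L2 T" "g \<in> L2 T" for f g \<alpha> \<beta>
      using ae[OF L2_add[OF L2_scale[OF that(1), of \<alpha>] L2_scale[OF that(2), of \<beta>]]]
        ae[OF that(1)] ae[OF that(2)] D.linear[OF that, of \<alpha> \<beta>]
      by eventually_elim simp
  qed (rule D.coercivity_pos)
qed

section \<open>Integral operators with $L^2$-bounded kernels\<close>

interpretation LT2: pair_sigma_finite "LT T" "LT T" for T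
  by unfold_locales

definition L2_kernel :: "real \<Rightarrow> (real \<Rightarrow> real \<Rightarrow> real) \<Rightarrow> bool" where
  "L2_kernel T K \<longleftrightarrow> (\<lambda>p. K (fst p) (snd p)) \<in> borel_measurable (LT T \<Otimes>\<^sub>M LT T) \<and>
     (\<exists>C. (\<forall>x\<in>{0..T}. (\<integral>\<^sup>+y. ennreal ((K x y)\<^sup>2) \<partial>LT T) \<le> ennreal C) \<and>
          (\<forall>y\<in>{0..T}. (\<integral>\<^sup>+x. ennreal ((K x y)\<^sup>2) \<partial>LT T) \<le> ennreal C))"

lemma L2_kernel_measurable:
  "L2_kernel T K \<Longrightarrow> (\<lambda>p. K (fst p) (snd p)) \<in> borel_measurable (LT T \<Otimes>\<^sub>M LT T)"
  by (simp add: L2_kernel_def)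

lemma L2_kernel_kadj: assumes "L2_kernel T K" shows "L2_kernel T (kadj K)"
proof -
  have "(\<lambda>p. K (fst p) (snd p)) \<circ> (\<lambda>(x, y). (y, x)) \<in> borel_measurable (LT T \<Otimes>\<^sub>M LT T)"
    using measurable_pair_swap' L2_kernel_measurable[OF assms] by (rule measurable_comp)
  then show ?thesis
    using assms by (auto simp: L2_kernel_def kadj_def comp_def case_prod_beta)
qed

lemma L2_kernel_row_L2: assumes K: "L2_kernel T K" and x: "x \<in> {0..T}" shows "(\<lambda>y. K x y) \<in> L2 T"
proof (rule L2I)
  show m: "(\<lambda>y. K x y) \<in> borel_measurable (LT T)"
    using measurable_Pair2[OF L2_kernel_measurable[OF K], of x] x by simp
  obtain C where "(\<integral>\<^sup>+y. ennreal ((K x y)\<^sup>2) \<partial>LT T) \<le> ennreal C"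
    using K x unfolding L2_kernel_def by blast
  then show "integrable (LT T) (\<lambda>y. (K x y)\<^sup>2)"
    using m by (auto simp: integrable_iff_bounded intro: le_less_trans[OF _ ennreal_less_top])
qed

lemma L2_kernel_row_bound:
  assumes K: "L2_kernel T K"
  obtains C where "0 \<le> C" "\<And>x. x \<in> {0..T} \<Longrightarrow> norm_L2 T (\<lambda>y. K x y) \<le> C"
proof -
  obtain C where C: "\<And>x. x \<in> {0..T} \<Longrightarrow> (\<integral>\<^sup>+y. ennreal ((K x y)\<^sup>2) \<partial>LT T) \<le> ennreal C"
    using K unfolding L2_kernel_def by blast
  have "norm_L2 T (\<lambda>y. K x y) \<le> sqrt (max 0 C)" if x: "x \<in> {0..T}" for x
  proof -
    have "(\<integral>y. (K x y)\<^sup>2 \<partial>LT T) = enn2real (\<integral>\<^sup>+y. ennreal ((K x y)\<^sup>2) \<partial>LT T)"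
      using L2_kernel_row_L2[OF K x] by (intro integral_eq_nn_integral) auto
    also have "\<dots> \<le> max 0 C"
    proof (cases "0 \<le> C")
      case True
      then show ?thesis using enn2real_mono[OF C[OF x]] by simp
    next
      case False
      then show ?thesis using C[OF x] by (simp add: ennreal_neg)
    qed
    finally show ?thesis
      by (simp add: norm_L2_def)
  qed
  then show ?thesis by (intro that[of "sqrt (max 0 C)"]) auto
qed

lemma L2_kernel_col_L2: "L2_kernel T K \<Longrightarrow> y \<in> {0..T} \<Longrightarrow> (\<lambda>x. K x y) \<in> L2 T"
  using L2_kernel_row_L2[OF L2_kernel_kadj] by (simp add: kadj_def)

lemma integrable_kernel_mult:
  "L2_kernel T K \<Longrightarrow> f \<in> L2 T \<Longrightarrow> x \<in> {0..T} \<Longrightarrow> integrable (LT T) (\<lambda>y. K x y * f y)"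
  by (rule integrable_mult_L2[OF L2_kernel_row_L2])

lemma kop_measurable:
  assumes K: "L2_kernel T K" and f: "f \<in> L2 T"
  shows "kop T K f \<in> borel_measurable (LT T)"
proof -
  have [measurable]: "f \<in> borel_measurable (LT T)"
    using f by (rule L2_borel_measurable)
  have [measurable]: "(\<lambda>p. K (fst p) (snd p)) \<in> borel_measurable (LT T \<Otimes>\<^sub>M LT T)"
    by (rule L2_kernel_measurable[OF K])
  have "case_prod (\<lambda>x y. K x y * f y) \<in> borel_measurable (LT T \<Otimes>\<^sub>M LT T)"
    unfolding case_prod_beta by measurable
  then show ?thesis
    unfolding kop_def by (rule LT.borel_measurable_lebesgue_integral)
qed

lemma abs_kop_le:
  assumes K: "L2_kernel T K" and C: "\<And>x. x \<in> {0..T} \<Longrightarrow> norm_L2 T (\<lambda>y. K x y) \<le> C"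
    and f: "f \<in> L2 T" and x: "x \<in> {0..T}"
  shows "\<bar>kop T K f x\<bar> \<le> C * norm_L2 T f"
proof -
  have "\<bar>kop T K f x\<bar> \<le> norm_L2 T (\<lambda>y. K x y) * norm_L2 T f"
    using abs_inner_L2_le_norm[OF L2_kernel_row_L2[OF K x] f] by (simp add: kop_def inner_L2_def)
  also have "\<dots> \<le> C * norm_L2 T f"
    by (rule mult_right_mono[OF C[OF x] norm_L2_nonneg])
  finally show ?thesis .
qed

lemma kop_L2: assumes K: "L2_kernel T K" and f: "f \<in> L2 T" shows "kop T K f \<in> L2 T"
proof -
  obtain C where "0 \<le> C" "\<And>x. x \<in> {0..T} \<Longrightarrow> norm_L2 T (\<lambda>y. K x y) \<le> C"
    using L2_kernel_row_bound[OF K] by blast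
  then show ?thesis
    using abs_kop_le[OF K _ f] kop_measurable[OF K f] norm_L2_nonneg[of T f]
    by (intro bounded_measurable_L2(1)[of _ _ "C * norm_L2 T f"]) auto
qed

lemma kop_bounded:
  assumes K: "L2_kernel T K"
  shows "\<exists>B\<ge>0. \<forall>f\<in>L2 T. norm_L2 T (kop T K f) \<le> B * norm_L2 T f"
proof -
  obtain C where "0 \<le> C" "\<And>x. x \<in> {0..T} \<Longrightarrow> norm_L2 T (\<lambda>y. K x y) \<le> C"
    using L2_kernel_row_bound[OF K] by blast
  then have "norm_L2 T (kop T K f) \<le> C * sqrt (measure (LT T) {0..T}) * norm_L2 T f" if "f \<in> L2 T" for f
    using abs_kop_le[OF K _ that] kop_measurable[OF K that] norm_L2_nonneg[of T f]
      bounded_measurable_L2(2)[of "kop T K f" T "C * norm_L2 T f"]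
    by (simp add: mult_ac)
  moreover have "0 \<le> C * sqrt (measure (LT T) {0..T})"
    using \<open>0 \<le> C\<close> by simp
  ultimately show ?thesis by blast
qed

lemma kop_cong: "(\<And>y. y \<in> {0..T} \<Longrightarrow> f y = g y) \<Longrightarrow> kop T K f x = kop T K g x"
  unfolding kop_def by (intro Bochner_Integration.integral_cong) auto

lemma kop_linear:
  assumes K: "L2_kernel T K" and f: "f \<in> L2 T" and g: "g \<in> L2 T" and x: "x \<in> {0..T}"
  shows "kop T K (\<lambda>y. \<alpha> * f y + \<beta> * g y) x = \<alpha> * kop T K f x + \<beta> * kop T K g x"
proof -
  have "kop T K (\<lambda>y. \<alpha> * f y + \<beta> * g y) x = (\<integral>y. \<alpha> * (K x y * f y) + \<beta> * (K x y * g y) \<partial>LT T)"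
    unfolding kop_def by (simp add: algebra_simps)
  also have "\<dots> = \<alpha> * kop T K f x + \<beta> * kop T K g x"
    unfolding kop_def using integrable_kernel_mult[OF K f x] integrable_kernel_mult[OF K g x] by simp
  finally show ?thesis .
qed

lemma nn_integral_abs_kernel_mult_le:
  assumes K: "L2_kernel T K" and C: "\<And>x. x \<in> {0..T} \<Longrightarrow> norm_L2 T (\<lambda>y. K x y) \<le> C"
    and f: "f \<in> L2 T" and x: "x \<in> {0..T}"
  shows "(\<integral>\<^sup>+y. ennreal \<bar>K x y * f y\<bar> \<partial>LT T) \<le> ennreal (C * norm_L2 T f)"
proof -
  have "(\<integral>\<^sup>+y. ennreal \<bar>K x y * f y\<bar> \<partial>LT T) = ennreal (\<integral>y. \<bar>K x y * f y\<bar> \<partial>LT T)"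
    using integrable_kernel_mult[OF K f x] by (intro nn_integral_eq_integral) auto
  also have "(\<integral>y. \<bar>K x y * f y\<bar> \<partial>LT T) \<le> norm_L2 T (\<lambda>y. K x y) * norm_L2 T f"
    by (rule integral_abs_mult_le_norm_L2[OF L2_kernel_row_L2[OF K x] f])
  also have "\<dots> \<le> C * norm_L2 T f"
    by (rule mult_right_mono[OF C[OF x] norm_L2_nonneg])
  finally show ?thesis
    by (simp add: ennreal_leI)
qed

lemma integrable_kernel_product:
  assumes K: "L2_kernel T K" and f: "f \<in> L2 T" and g: "g \<in> L2 T"
  shows "integrable (LT T \<Otimes>\<^sub>M LT T) (\<lambda>(x, y). K x y * f y * g x)"
proof -
  have [measurable]: "(\<lambda>p. K (fst p) (snd p)) \<in> borel_measurable (LT T \<Otimes>\<^sub>M LT T)"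
    "f \<in> borel_measurable (LT T)" "g \<in> borel_measurable (LT T)"
    using K f g by (auto intro: L2_kernel_measurable L2_borel_measurable)
  obtain C where C: "\<And>x. x \<in> {0..T} \<Longrightarrow> norm_L2 T (\<lambda>y. K x y) \<le> C"
    using L2_kernel_row_bound[OF K] by blast
  have "(\<integral>\<^sup>+p. ennreal (norm ((\<lambda>(x, y). K x y * f y * g x) p)) \<partial>(LT T \<Otimes>\<^sub>M LT T))
      = (\<integral>\<^sup>+x. \<integral>\<^sup>+y. ennreal \<bar>g x\<bar> * ennreal \<bar>K x y * f y\<bar> \<partial>LT T \<partial>LT T)"
    by (subst LT.nn_integral_fst[symmetric]) (auto simp: abs_mult ennreal_mult[symmetric] mult_ac)
  also have "\<dots> \<le> (\<integral>\<^sup>+x. ennreal \<bar>g x\<bar> * ennreal (C * norm_L2 T f) \<partial>LT T)"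
  proof (rule nn_integral_mono)
    fix x assume "x \<in> space (LT T)"
    then have x: "x \<in> {0..T}" by simp
    have [measurable]: "(\<lambda>y. K x y * f y) \<in> borel_measurable (LT T)"
      by (rule borel_measurable_integrable[OF integrable_kernel_mult[OF K f x]])
    have "(\<integral>\<^sup>+y. ennreal \<bar>g x\<bar> * ennreal \<bar>K x y * f y\<bar> \<partial>LT T)
        = ennreal \<bar>g x\<bar> * (\<integral>\<^sup>+y. ennreal \<bar>K x y * f y\<bar> \<partial>LT T)"
      by (rule nn_integral_cmult) measurable
    also have "\<dots> \<le> ennreal \<bar>g x\<bar> * ennreal (C * norm_L2 T f)"
      by (rule mult_left_mono[OF nn_integral_abs_kernel_mult_le[OF K C f x] zero_le])
    finally show "(\<integral>\<^sup>+y. ennreal \<bar>g x\<bar> * ennreal \<bar>K x y * f y\<bar> \<partial>LT T)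
        \<le> ennreal \<bar>g x\<bar> * ennreal (C * norm_L2 T f)" .
  qed
  also have "\<dots> = (\<integral>\<^sup>+x. ennreal \<bar>g x\<bar> \<partial>LT T) * ennreal (C * norm_L2 T f)"
    by (rule nn_integral_multc) measurable
  also have "\<dots> < \<infinity>"
    using integrable_L2[OF g] by (auto simp: integrable_iff_bounded ennreal_mult_less_top)
  finally show ?thesis
    by (simp add: integrable_iff_bounded)
qed

lemma kop_adjoint:
  assumes K: "L2_kernel T K" and f: "f \<in> L2 T" and g: "g \<in> L2 T"
  shows "inner_L2 T (kop T K f) g = inner_L2 T f (kop T (kadj K) g)"
proof -
  have "inner_L2 T (kop T K f) g = (\<integral>x. \<integral>y. K x y * f y * g x \<partial>LT T \<partial>LT T)"
    by (simp add: inner_L2_def kop_def)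
  also have "\<dots> = (\<integral>y. \<integral>x. K x y * f y * g x \<partial>LT T \<partial>LT T)"
    by (rule LT2.Fubini_integral[OF integrable_kernel_product[OF K f g], symmetric])
  also have "\<dots> = inner_L2 T f (kop T (kadj K) g)"
    by (simp add: inner_L2_def kop_def kadj_def mult_ac)
  finally show ?thesis .
qed

lemma inner_kop_kadj_self:
  "L2_kernel T K \<Longrightarrow> f \<in> L2 T \<Longrightarrow> inner_L2 T (kop T (kadj K) f) f = inner_L2 T (kop T K f) f"
  using kop_adjoint[OF L2_kernel_kadj] by (simp add: kadj_def inner_L2_commute)

lemma nonneg_definite_form_eq:
  assumes K: "L2_kernel T K" and f: "f \<in> L2 T"
  shows "(\<integral>t. (\<integral>s. (K t s + K s t) * f s * f t \<partial>LT T) \<partial>LT T) = 2 * inner_L2 T (kop T K f) f"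
proof -
  have "(\<integral>s. (K t s + K s t) * f s * f t \<partial>LT T) = (kop T K f t + kop T (kadj K) f t) * f t"
    if t: "t \<in> {0..T}" for t
  proof -
    have "(\<integral>s. (K t s + K s t) * f s * f t \<partial>LT T) = (\<integral>s. (K t s * f s + kadj K t s * f s) * f t \<partial>LT T)"
      by (simp add: kadj_def algebra_simps)
    also have "\<dots> = (\<integral>s. K t s * f s + kadj K t s * f s \<partial>LT T) * f t"
      by (rule integral_mult_left_zero)
    also have "(\<integral>s. K t s * f s + kadj K t s * f s \<partial>LT T) = kop T K f t + kop T (kadj K) f t"
      unfolding kop_def
      by (rule Bochner_Integration.integral_add[OF integrable_kernel_mult[OF K f t]
            integrable_kernel_mult[OF L2_kernel_kadj[OF K] f t]])
    finally show ?thesis .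
  qed
  then have "(\<integral>t. (\<integral>s. (K t s + K s t) * f s * f t \<partial>LT T) \<partial>LT T)
      = inner_L2 T (\<lambda>t. kop T K f t + kop T (kadj K) f t) f"
    unfolding inner_L2_def by (intro Bochner_Integration.integral_cong) auto
  also have "\<dots> = 2 * inner_L2 T (kop T K f) f"
    using K f by (simp add: inner_L2_add_left kop_L2 L2_kernel_kadj inner_kop_kadj_self)
  finally show ?thesis .
qed

lemma nonneg_definite_iff_kop:
  assumes K: "L2_kernel T K"
  shows "nonneg_definite T K \<longleftrightarrow> (\<forall>f\<in>L2 T. 0 \<le> inner_L2 T (kop T K f) f)"
proof -
  have "0 \<le> (\<integral>t. (\<integral>s. (K t s + K s t) * f s * f t \<partial>LT T) \<partial>LT T) \<longleftrightarrow> 0 \<le> inner_L2 T (kop T K f) f"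
    if "f \<in> L2 T" for f
    unfolding nonneg_definite_form_eq[OF K that] by simp
  then show ?thesis
    unfolding nonneg_definite_def by blast
qed

lemma L2_kernel_bounded:
  assumes m: "(\<lambda>p. K (fst p) (snd p)) \<in> borel_measurable (LT T \<Otimes>\<^sub>M LT T)"
    and B: "\<And>x y. \<bar>K x y\<bar> \<le> B"
  shows "L2_kernel T K"
proof -
  have bound: "(\<integral>\<^sup>+y. ennreal ((h y)\<^sup>2) \<partial>LT T) \<le> ennreal (B\<^sup>2 * measure (LT T) {0..T})"
    if h: "\<And>y. \<bar>h y\<bar> \<le> B" for h :: "real \<Rightarrow> real"
  proof -
    have "(\<integral>\<^sup>+y. ennreal ((h y)\<^sup>2) \<partial>LT T) \<le> (\<integral>\<^sup>+y. ennreal (B\<^sup>2) \<partial>LT T)"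
      using h by (intro nn_integral_mono ennreal_leI) (metis abs_ge_zero power2_abs power_mono)
    then show ?thesis
      by (simp add: LT.emeasure_eq_measure ennreal_mult)
  qed
  show ?thesis
    unfolding L2_kernel_def
  proof (intro conjI exI ballI)
    show "(\<integral>\<^sup>+y. ennreal ((K x y)\<^sup>2) \<partial>LT T) \<le> ennreal (B\<^sup>2 * measure (LT T) {0..T})" for x
      by (rule bound) (rule B)
    show "(\<integral>\<^sup>+x. ennreal ((K x y)\<^sup>2) \<partial>LT T) \<le> ennreal (B\<^sup>2 * measure (LT T) {0..T})" for y
      by (rule bound) (rule B)
  qed (rule m)
qed

lemma nn_integral_square_add_le:
  assumes [measurable]: "h \<in> borel_measurable M" "k \<in> borel_measurable M"
  shows "(\<integral>\<^sup>+y. ennreal ((h y + k y)\<^sup>2) \<partial>M)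
    \<le> 2 * (\<integral>\<^sup>+y. ennreal ((h y)\<^sup>2) \<partial>M) + 2 * (\<integral>\<^sup>+y. ennreal ((k y)\<^sup>2) \<partial>M)"
proof -
  have "(\<integral>\<^sup>+y. ennreal ((h y + k y)\<^sup>2) \<partial>M)
      \<le> (\<integral>\<^sup>+y. 2 * ennreal ((h y)\<^sup>2) + 2 * ennreal ((k y)\<^sup>2) \<partial>M)"
  proof (rule nn_integral_mono)
    fix y
    have "(h y + k y)\<^sup>2 \<le> 2 * (h y)\<^sup>2 + 2 * (k y)\<^sup>2"
      using sum_squares_bound[of "h y" "k y"] by (simp add: power2_sum)
    then have "ennreal ((h y + k y)\<^sup>2) \<le> ennreal (2 * (h y)\<^sup>2 + 2 * (k y)\<^sup>2)"
      by (rule ennreal_leI)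
    then show "ennreal ((h y + k y)\<^sup>2) \<le> 2 * ennreal ((h y)\<^sup>2) + 2 * ennreal ((k y)\<^sup>2)"
      by (simp add: ennreal_plus ennreal_mult)
  qed
  also have "\<dots> = 2 * (\<integral>\<^sup>+y. ennreal ((h y)\<^sup>2) \<partial>M) + 2 * (\<integral>\<^sup>+y. ennreal ((k y)\<^sup>2) \<partial>M)"
    by (simp add: nn_integral_add nn_integral_cmult)
  finally show ?thesis .
qed

lemma L2_kernel_add:
  assumes K: "L2_kernel T K" and L: "L2_kernel T L"
  shows "L2_kernel T (\<lambda>x y. K x y + L x y)"
proof -
  obtain CK CL where
    CK: "\<forall>x\<in>{0..T}. (\<integral>\<^sup>+y. ennreal ((K x y)\<^sup>2) \<partial>LT T) \<le> ennreal CK"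
        "\<forall>y\<in>{0..T}. (\<integral>\<^sup>+x. ennreal ((K x y)\<^sup>2) \<partial>LT T) \<le> ennreal CK" and
    CL: "\<forall>x\<in>{0..T}. (\<integral>\<^sup>+y. ennreal ((L x y)\<^sup>2) \<partial>LT T) \<le> ennreal CL"
        "\<forall>y\<in>{0..T}. (\<integral>\<^sup>+x. ennreal ((L x y)\<^sup>2) \<partial>LT T) \<le> ennreal CL"
    using K L unfolding L2_kernel_def by blast
  have sum: "(\<integral>\<^sup>+y. ennreal ((h y + k y)\<^sup>2) \<partial>LT T) \<le> ennreal (2 * max 0 CK + 2 * max 0 CL)"
    if h: "h \<in> L2 T" "(\<integral>\<^sup>+y. ennreal ((h y)\<^sup>2) \<partial>LT T) \<le> ennreal CK"
      and k: "k \<in> L2 T" "(\<integral>\<^sup>+y. ennreal ((k y)\<^sup>2) \<partial>LT T) \<le> ennreal CL" for h k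
  proof -
    have "(\<integral>\<^sup>+y. ennreal ((h y + k y)\<^sup>2) \<partial>LT T) \<le> 2 * ennreal (max 0 CK) + 2 * ennreal (max 0 CL)"
      using nn_integral_square_add_le[OF L2_borel_measurable[OF h(1)] L2_borel_measurable[OF k(1)]]
        order_trans[OF h(2) ennreal_leI[OF max.cobounded2]] order_trans[OF k(2) ennreal_leI[OF max.cobounded2]]
      by (meson add_mono mult_left_mono order_trans zero_le)
    then show ?thesis
      by (simp add: ennreal_plus ennreal_mult)
  qed
  have "(\<integral>\<^sup>+y. ennreal ((K x y + L x y)\<^sup>2) \<partial>LT T) \<le> ennreal (2 * max 0 CK + 2 * max 0 CL)"
    if "x \<in> {0..T}" for x
    by (rule sum[OF L2_kernel_row_L2[OF K that] CK(1)[rule_format, OF that]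
          L2_kernel_row_L2[OF L that] CL(1)[rule_format, OF that]])
  moreover have "(\<integral>\<^sup>+x. ennreal ((K x y + L x y)\<^sup>2) \<partial>LT T) \<le> ennreal (2 * max 0 CK + 2 * max 0 CL)"
    if "y \<in> {0..T}" for y
    by (rule sum[OF L2_kernel_col_L2[OF K that] CK(2)[rule_format, OF that]
          L2_kernel_col_L2[OF L that] CL(2)[rule_format, OF that]])
  moreover have "(\<lambda>p. K (fst p) (snd p) + L (fst p) (snd p)) \<in> borel_measurable (LT T \<Otimes>\<^sub>M LT T)"
    using K L by (intro borel_measurable_add L2_kernel_measurable)
  ultimately show ?thesis
    unfolding L2_kernel_def by blast
qed

lemma L2_kernel_dominated:
  assumes K: "L2_kernel T K"
    and m: "(\<lambda>p. K' (fst p) (snd p)) \<in> borel_measurable (LT T \<Otimes>\<^sub>M LT T)"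
    and dom: "\<And>x y. \<bar>K' x y\<bar> \<le> \<bar>K x y\<bar>"
  shows "L2_kernel T K'"
proof -
  obtain C where
    C: "\<forall>x\<in>{0..T}. (\<integral>\<^sup>+y. ennreal ((K x y)\<^sup>2) \<partial>LT T) \<le> ennreal C"
       "\<forall>y\<in>{0..T}. (\<integral>\<^sup>+x. ennreal ((K x y)\<^sup>2) \<partial>LT T) \<le> ennreal C"
    using K unfolding L2_kernel_def by blast
  have sq: "ennreal ((K' x y)\<^sup>2) \<le> ennreal ((K x y)\<^sup>2)" for x y
    using dom[of x y] by (intro ennreal_leI) (metis abs_ge_zero power2_abs power_mono)
  have "(\<integral>\<^sup>+y. ennreal ((K' x y)\<^sup>2) \<partial>LT T) \<le> ennreal C" if "x \<in> {0..T}" for x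
    by (rule order_trans[OF nn_integral_mono C(1)[rule_format, OF that]]) (rule sq)
  moreover have "(\<integral>\<^sup>+x. ennreal ((K' x y)\<^sup>2) \<partial>LT T) \<le> ennreal C" if "y \<in> {0..T}" for y
    by (rule order_trans[OF nn_integral_mono C(2)[rule_format, OF that]]) (rule sq)
  ultimately show ?thesis
    using m unfolding L2_kernel_def by blast
qed

section \<open>The operator $D_t$\<close>

lemma L2_kernel_one_kernel: "L2_kernel T (one_kernel t)"
proof (rule L2_kernel_bounded)
  show "(\<lambda>p. one_kernel t (fst p) (snd p)) \<in> borel_measurable (LT T \<Otimes>\<^sub>M LT T)"
    unfolding one_kernel_def by measurable
  show "\<bar>one_kernel t x y\<bar> \<le> 1" for x y
    by (simp add: one_kernel_def)
qed

context
  fixes T lam \<rho> \<phi> t :: real and G :: "real \<Rightarrow> real \<Rightarrow> real"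
  assumes A: "L2_kernel T (Gt_kernel \<rho> G t)"
begin

lemma D_op_parts_L2:
  assumes f: "f \<in> L2 T"
  shows "kop T (Gt_kernel \<rho> G t) f \<in> L2 T" "kop T (kadj (Gt_kernel \<rho> G t)) f \<in> L2 T"
    "kop T (one_kernel t) f \<in> L2 T" "kop T (kadj (one_kernel t)) (kop T (one_kernel t) f) \<in> L2 T"
  by (intro kop_L2 A L2_kernel_kadj L2_kernel_one_kernel f)+

lemma D_op_L2: "f \<in> L2 T \<Longrightarrow> D_op T lam \<rho> \<phi> G t f \<in> L2 T"
  unfolding D_op_def by (intro L2_add L2_scale D_op_parts_L2)

lemma D_op_bounded: "\<exists>M. \<forall>f\<in>L2 T. norm_L2 T (D_op T lam \<rho> \<phi> G t f) \<le> M * norm_L2 T f"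
proof -
  obtain B1 B2 B3 B4 where B: "0 \<le> B1" "0 \<le> B2" "0 \<le> B3" "0 \<le> B4"
    and "\<forall>f\<in>L2 T. norm_L2 T (kop T (Gt_kernel \<rho> G t) f) \<le> B1 * norm_L2 T f"
    and "\<forall>f\<in>L2 T. norm_L2 T (kop T (kadj (Gt_kernel \<rho> G t)) f) \<le> B2 * norm_L2 T f"
    and "\<forall>f\<in>L2 T. norm_L2 T (kop T (one_kernel t) f) \<le> B3 * norm_L2 T f"
    and "\<forall>f\<in>L2 T. norm_L2 T (kop T (kadj (one_kernel t)) f) \<le> B4 * norm_L2 T f"
    using kop_bounded[OF A] kop_bounded[OF L2_kernel_kadj[OF A]]
      kop_bounded[OF L2_kernel_one_kernel] kop_bounded[OF L2_kernel_kadj[OF L2_kernel_one_kernel]]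
    by blast
  note bounds = this(5-8)[rule_format]
  have "norm_L2 T (D_op T lam \<rho> \<phi> G t f) \<le> (2 * \<bar>lam\<bar> + B1 + B2 + 2 * \<bar>\<phi>\<bar> * (B4 * B3)) * norm_L2 T f"
    if f: "f \<in> L2 T" for f
  proof -
    note P = D_op_parts_L2[OF f]
    have "norm_L2 T (D_op T lam \<rho> \<phi> G t f)
        \<le> norm_L2 T (\<lambda>x. 2 * lam * f x) + norm_L2 T (kop T (Gt_kernel \<rho> G t) f)
          + norm_L2 T (kop T (kadj (Gt_kernel \<rho> G t)) f)
          + norm_L2 T (\<lambda>x. 2 * \<phi> * kop T (kadj (one_kernel t)) (kop T (one_kernel t) f) x)"
      unfolding D_op_def
      by (intro order_trans[OF norm_L2_add_le] add_mono order_refl L2_add L2_scale P f)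
    also have "\<dots> \<le> 2 * \<bar>lam\<bar> * norm_L2 T f + B1 * norm_L2 T f + B2 * norm_L2 T f
        + 2 * \<bar>\<phi>\<bar> * (B4 * (B3 * norm_L2 T f))"
      unfolding norm_L2_scale
      using bounds(1,2)[OF f] order_trans[OF bounds(4)[OF P(3)] mult_left_mono[OF bounds(3)[OF f] B(4)]]
      by (intro add_mono mult_left_mono) (auto simp: abs_mult intro: mult_left_mono)
    finally show ?thesis
      by (simp add: algebra_simps)
  qed
  then show ?thesis by blast
qed

lemma D_op_linear:
  assumes f: "f \<in> L2 T" and g: "g \<in> L2 T" and x: "x \<in> {0..T}"
  shows "D_op T lam \<rho> \<phi> G t (\<lambda>y. \<alpha> * f y + \<beta> * g y) x
    = \<alpha> * D_op T lam \<rho> \<phi> G t f x + \<beta> * D_op T lam \<rho> \<phi> G t g x"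
proof -
  note B = L2_kernel_one_kernel[of T t]
  have "kop T (kadj (one_kernel t)) (kop T (one_kernel t) (\<lambda>y. \<alpha> * f y + \<beta> * g y)) x
      = kop T (kadj (one_kernel t)) (\<lambda>y. \<alpha> * kop T (one_kernel t) f y + \<beta> * kop T (one_kernel t) g y) x"
    by (rule kop_cong) (rule kop_linear[OF B f g])
  also have "\<dots> = \<alpha> * kop T (kadj (one_kernel t)) (kop T (one_kernel t) f) x
      + \<beta> * kop T (kadj (one_kernel t)) (kop T (one_kernel t) g) x"
    by (rule kop_linear[OF L2_kernel_kadj[OF B] kop_L2[OF B f] kop_L2[OF B g] x])
  finally show ?thesis
    unfolding D_op_def kop_linear[OF A f g x] kop_linear[OF L2_kernel_kadj[OF A] f g x]
    by (simp add: algebra_simps)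
qed

lemma D_op_inner:
  assumes f: "f \<in> L2 T" and g: "g \<in> L2 T"
  shows "inner_L2 T (D_op T lam \<rho> \<phi> G t f) g
    = 2 * lam * inner_L2 T f g + inner_L2 T (kop T (Gt_kernel \<rho> G t) f) g
      + inner_L2 T (kop T (kadj (Gt_kernel \<rho> G t)) f) g
      + 2 * \<phi> * inner_L2 T (kop T (one_kernel t) f) (kop T (one_kernel t) g)"
proof -
  note P = D_op_parts_L2[OF f]
  have "inner_L2 T (kop T (kadj (one_kernel t)) (kop T (one_kernel t) f)) g
      = inner_L2 T (kop T (one_kernel t) f) (kop T (one_kernel t) g)"
    using kop_adjoint[OF L2_kernel_kadj[OF L2_kernel_one_kernel] P(3) g] by (simp add: kadj_def)
  then show ?thesis
    unfolding D_op_def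
    by (simp add: inner_L2_add_left L2_add L2_scale P f g inner_L2_scale_left)
qed

lemma D_op_self_adjoint:
  assumes f: "f \<in> L2 T" and g: "g \<in> L2 T"
  shows "inner_L2 T (D_op T lam \<rho> \<phi> G t f) g = inner_L2 T f (D_op T lam \<rho> \<phi> G t g)"
proof -
  have "inner_L2 T (kop T (Gt_kernel \<rho> G t) f) g = inner_L2 T (kop T (kadj (Gt_kernel \<rho> G t)) g) f"
    "inner_L2 T (kop T (kadj (Gt_kernel \<rho> G t)) f) g = inner_L2 T (kop T (Gt_kernel \<rho> G t) g) f"
    using kop_adjoint[OF A f g] kop_adjoint[OF L2_kernel_kadj[OF A] f g]
    by (simp_all add: inner_L2_commute kadj_def)
  then show ?thesis
    using D_op_inner[OF f g] D_op_inner[OF g f]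
    by (simp add: inner_L2_commute[of T f] inner_L2_commute[of T "kop T (one_kernel t) f"])
qed

lemma coercive_L2_operator_D_op:
  assumes pos: "\<And>f. f \<in> L2 T \<Longrightarrow> 0 \<le> inner_L2 T (kop T (Gt_kernel \<rho> G t) f) f"
    and "0 < lam" "0 \<le> \<phi>"
  shows "coercive_L2_operator T (D_op T lam \<rho> \<phi> G t) (2 * lam)"
proof
  show "D_op T lam \<rho> \<phi> G t f \<in> L2 T" if "f \<in> L2 T" for f
    using that by (rule D_op_L2)
  show "\<exists>M. \<forall>f\<in>L2 T. norm_L2 T (D_op T lam \<rho> \<phi> G t f) \<le> M * norm_L2 T f"
    by (rule D_op_bounded)
  show "AE x in LT T. D_op T lam \<rho> \<phi> G t (\<lambda>y. \<alpha> * f y + \<beta> * g y) x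
      = \<alpha> * D_op T lam \<rho> \<phi> G t f x + \<beta> * D_op T lam \<rho> \<phi> G t g x"
    if "f \<in> L2 T" "g \<in> L2 T" for f g \<alpha> \<beta>
    using AE_LT_space by eventually_elim (rule D_op_linear[OF that])
  show "2 * lam * (norm_L2 T f)\<^sup>2 \<le> inner_L2 T (D_op T lam \<rho> \<phi> G t f) f" if f: "f \<in> L2 T" for f
  proof -
    have "inner_L2 T (D_op T lam \<rho> \<phi> G t f) f = 2 * lam * (norm_L2 T f)\<^sup>2
        + 2 * inner_L2 T (kop T (Gt_kernel \<rho> G t) f) f + 2 * \<phi> * (norm_L2 T (kop T (one_kernel t) f))\<^sup>2"
      using D_op_inner[OF f f] inner_kop_kadj_self[OF A f] by (simp add: inner_L2_self)
    then show ?thesis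
      using pos[OF f] \<open>0 \<le> \<phi>\<close> by simp
  qed
qed (use \<open>0 < lam\<close> in simp)

end

section \<open>Positivity of the kernel part of $D_t$\<close>

lemma L2_kernel_strict_lower: "L2_kernel T (\<lambda>x y. c * (if y < x then 1 else 0))"
  by (rule L2_kernel_bounded[where B="\<bar>c\<bar>"]) auto

lemma L2_kernel_Gtilde: assumes "L2_kernel T G" shows "L2_kernel T (Gtilde \<rho> G)"
  using L2_kernel_add[OF L2_kernel_strict_lower[of T "2 * \<rho>"] assms]
  by (simp add: Gtilde_def[abs_def])

lemma L2_kernel_Gt_kernel: assumes G: "L2_kernel T G" shows "L2_kernel T (Gt_kernel \<rho> G t)"
proof (rule L2_kernel_dominated[OF L2_kernel_Gtilde[OF G]])
  have [measurable]: "(\<lambda>p. Gtilde \<rho> G (fst p) (snd p)) \<in> borel_measurable (LT T \<Otimes>\<^sub>M LT T)"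
    by (rule L2_kernel_measurable[OF L2_kernel_Gtilde[OF G]])
  show "(\<lambda>p. Gt_kernel \<rho> G t (fst p) (snd p)) \<in> borel_measurable (LT T \<Otimes>\<^sub>M LT T)"
    unfolding Gt_kernel_def by measurable
  show "\<bar>Gt_kernel \<rho> G t x y\<bar> \<le> \<bar>Gtilde \<rho> G x y\<bar>" for x y
    by (simp add: Gt_kernel_def)
qed

lemma inner_kop_strict_lower_self:
  assumes g: "g \<in> L2 T"
  shows "2 * inner_L2 T (kop T (\<lambda>x y. if y < x then 1 else 0) g) g = (\<integral>x. g x \<partial>LT T)\<^sup>2"
proof -
  define V :: "real \<Rightarrow> real \<Rightarrow> real" where "V = (\<lambda>x y. if y < x then 1 else 0)"
  have V: "L2_kernel T V"
    using L2_kernel_strict_lower[of T 1] by (simp add: V_def)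
  have [measurable]: "g \<in> borel_measurable (LT T)"
    using g by (rule L2_borel_measurable)
  have sum: "kop T V g x + kop T (kadj V) g x = (\<integral>y. g y \<partial>LT T)" if x: "x \<in> {0..T}" for x
  proof -
    have "kop T V g x + kop T (kadj V) g x = (\<integral>y. (V x y + V y x) * g y \<partial>LT T)"
      using integrable_kernel_mult[OF V g x] integrable_kernel_mult[OF L2_kernel_kadj[OF V] g x]
      by (simp add: kop_def kadj_def distrib_right)
    also have "\<dots> = (\<integral>y. g y \<partial>LT T)"
    proof (rule integral_LT_AE_cong)
      have "AE y in LT T. y \<noteq> x"
        using AE_lborel_singleton[of x] by (rule AE_LT_if_AE_lborel)
      then show "AE y in LT T. (V x y + V y x) * g y = g y"
        by eventually_elim (auto simp: V_def)
      show "(\<lambda>y. (V x y + V y x) * g y) \<in> borel_measurable (LT T)"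
        unfolding V_def by measurable
    qed
    finally show ?thesis .
  qed
  have "2 * inner_L2 T (kop T V g) g = inner_L2 T (\<lambda>x. kop T V g x + kop T (kadj V) g x) g"
    using V g by (simp add: inner_L2_add_left kop_L2 L2_kernel_kadj inner_kop_kadj_self)
  also have "\<dots> = inner_L2 T (\<lambda>x. \<integral>y. g y \<partial>LT T) g"
    unfolding inner_L2_def by (intro Bochner_Integration.integral_cong refl) (simp add: sum)
  also have "\<dots> = (\<integral>x. g x \<partial>LT T)\<^sup>2"
    by (simp add: inner_L2_def power2_eq_square)
  finally show ?thesis
    by (simp add: V_def)
qed

lemma inner_kop_Gtilde_self:
  assumes G: "L2_kernel T G" and g: "g \<in> L2 T"
  shows "inner_L2 T (kop T (Gtilde \<rho> G) g) g = \<rho> * (\<integral>x. g x \<partial>LT T)\<^sup>2 + inner_L2 T (kop T G g) g"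
proof -
  define V :: "real \<Rightarrow> real \<Rightarrow> real" where "V = (\<lambda>x y. if y < x then 1 else 0)"
  have V: "L2_kernel T V"
    using L2_kernel_strict_lower[of T 1] by (simp add: V_def)
  have "kop T (Gtilde \<rho> G) g x = 2 * \<rho> * kop T V g x + kop T G g x" if x: "x \<in> {0..T}" for x
    using integrable_kernel_mult[OF V g x] integrable_kernel_mult[OF G g x]
    by (simp add: kop_def Gtilde_def V_def distrib_right mult.assoc)
  then have "inner_L2 T (kop T (Gtilde \<rho> G) g) g = inner_L2 T (\<lambda>x. 2 * \<rho> * kop T V g x + kop T G g x) g"
    unfolding inner_L2_def by (intro Bochner_Integration.integral_cong refl) simp
  also have "\<dots> = \<rho> * (2 * inner_L2 T (kop T V g) g) + inner_L2 T (kop T G g) g"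
    using V G g by (simp add: inner_L2_add_left inner_L2_scale_left L2_scale kop_L2)
  finally show ?thesis
    using inner_kop_strict_lower_self[OF g] by (simp add: V_def)
qed

text \<open>Cutting \<open>f\<close> off below \<open>t\<close> loses nothing: the Volterra property kills the extra
  products \<open>G x y f y f x\<close> with \<open>x < t \<le> y\<close>.\<close>

lemma inner_kop_Gt_kernel_self:
  assumes volterra: "volterra T G" and f: "f \<in> L2 T"
  shows "inner_L2 T (kop T (Gt_kernel \<rho> G t) f) f
    = inner_L2 T (kop T (Gtilde \<rho> G) (\<lambda>x. f x * (if t \<le> x then 1 else 0))) (\<lambda>x. f x * (if t \<le> x then 1 else 0))"
proof -
  define g where "g x = f x * (if t \<le> x then 1 else 0)" for x
  have cut: "kop T (Gt_kernel \<rho> G t) f x = kop T (Gtilde \<rho> G) g x" for x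
    by (simp add: kop_def Gt_kernel_def g_def mult_ac)
  have "kop T (Gtilde \<rho> G) g x * f x = kop T (Gtilde \<rho> G) g x * g x" if x: "x \<in> {0..T}" for x
  proof (cases "t \<le> x")
    case False
    have zero: "Gtilde \<rho> G x y * g y = 0" if y: "y \<in> {0..T}" for y
      using volterra x y False by (cases "t \<le> y") (auto simp: Gtilde_def g_def volterra_def)
    have "kop T (Gtilde \<rho> G) g x = (\<integral>y. 0 \<partial>LT T)"
      unfolding kop_def by (rule Bochner_Integration.integral_cong) (auto simp: zero)
    then show ?thesis by simp
  qed (simp add: g_def)
  then show ?thesis
    unfolding inner_L2_def cut g_def[symmetric] by (intro Bochner_Integration.integral_cong refl) simp
qed

lemma inner_kop_Gt_kernel_nonneg:
  assumes G: "L2_kernel T G" and "volterra T G" and "nonneg_definite T G" and "0 \<le> \<rho>"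
    and f: "f \<in> L2 T"
  shows "0 \<le> inner_L2 T (kop T (Gt_kernel \<rho> G t) f) f"
proof -
  have g: "(\<lambda>x. f x * (if t \<le> x then 1 else 0)) \<in> L2 T"
    using f by (rule L2_cut)
  show ?thesis
    unfolding inner_kop_Gt_kernel_self[OF \<open>volterra T G\<close> f] inner_kop_Gtilde_self[OF G g]
    using \<open>nonneg_definite T G\<close> g \<open>0 \<le> \<rho>\<close> by (simp add: nonneg_definite_iff_kop[OF G])
qed

section \<open>A Borel version of the kernel\<close>

lemma AE_sections_null_lborel:
  fixes N :: "(real \<times> real) set"
  assumes N: "N \<in> null_sets lborel"
  shows "AE x in LT T. AE y in LT T. (x, y) \<notin> N" and "AE y in LT T. AE x in LT T. (x, y) \<notin> N"
proof -
  have N2: "N \<in> null_sets (lborel \<Otimes>\<^sub>M lborel)"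
    using N by (simp only: lborel_prod)
  then have "AE p in lborel \<Otimes>\<^sub>M lborel. p \<notin> N"
    by (rule AE_not_in)
  then have rows: "AE x in lborel. AE y in lborel. (x, y) \<notin> N"
    by (rule lborel_pair.AE_pair)
  have "{p \<in> space (lborel \<Otimes>\<^sub>M lborel). (fst p, snd p) \<notin> N} = space (lborel \<Otimes>\<^sub>M lborel) - N"
    by auto
  then have "{p \<in> space (lborel \<Otimes>\<^sub>M lborel). (fst p, snd p) \<notin> N} \<in> sets (lborel \<Otimes>\<^sub>M lborel)"
    using sets.compl_sets[OF null_setsD2[OF N2]] by simp
  from iffD1[OF lborel_pair.AE_commute[of "\<lambda>x y. (x, y) \<notin> N", OF this] rows]
  have cols: "AE y in lborel. AE x in lborel. (x, y) \<notin> N" .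
  show "AE x in LT T. AE y in LT T. (x, y) \<notin> N"
    using rows by (intro AE_LT_if_AE_lborel) (auto elim!: eventually_mono intro: AE_LT_if_AE_lborel)
  show "AE y in LT T. AE x in LT T. (x, y) \<notin> N"
    using cols by (intro AE_LT_if_AE_lborel) (auto elim!: eventually_mono intro: AE_LT_if_AE_lborel)
qed

lemma Borel_kernel_AE_eq:
  fixes G :: "real \<Rightarrow> real \<Rightarrow> real"
  assumes G: "(\<lambda>(x, y). G x y) \<in> borel_measurable (lebesgue_on ({0..T} \<times> {0..T}))"
  obtains g where "(\<lambda>p. g (fst p) (snd p)) \<in> borel_measurable (LT T \<Otimes>\<^sub>M LT T)"
    and "AE x in LT T. AE y in LT T. G x y = g x y" and "AE y in LT T. AE x in LT T. G x y = g x y"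
proof -
  define S where "S = {0..T} \<times> {0..T :: real}"
  have S: "S \<in> sets lebesgue"
    unfolding S_def by (intro sets_completionI_sets) (auto intro!: borel_closed closed_Times)
  have "(\<lambda>p. if p \<in> S then (\<lambda>(x, y). G x y) p else 0) \<in> borel_measurable lebesgue"
    using borel_measurable_if[OF S] G unfolding S_def by blast
  then obtain g2 where g2: "g2 \<in> borel_measurable lborel"
    and ae: "AE p in lborel. (if p \<in> S then (\<lambda>(x, y). G x y) p else 0) = g2 p"
    using completion_ex_borel_measurable_real by blast
  obtain N where off_N: "\<And>p. p \<in> space lborel - N \<Longrightarrow> (if p \<in> S then (\<lambda>(x, y). G x y) p else 0) = g2 p"
    and N: "N \<in> null_sets lborel"
    using AE_E3[OF ae] by blast
  have "(\<lambda>p. (fst p, snd p)) \<in> (LT T \<Otimes>\<^sub>M LT T) \<rightarrow>\<^sub>M (borel \<Otimes>\<^sub>M borel)"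
    by measurable
  then have g2_LT: "(\<lambda>p. g2 (fst p, snd p)) \<in> borel_measurable (LT T \<Otimes>\<^sub>M LT T)"
    using g2 by (simp add: borel_prod)
  have eq: "G x y = g2 (x, y)" if "x \<in> {0..T}" "y \<in> {0..T}" "(x, y) \<notin> N" for x y
    using off_N[of "(x, y)"] that by (simp add: S_def)
  have rows: "AE x in LT T. AE y in LT T. G x y = g2 (x, y)"
    using AE_sections_null_lborel(1)[OF N, of T] AE_LT_space[of T]
  proof eventually_elim
    case (elim x)
    show ?case
      using elim(1) AE_LT_space[of T] by eventually_elim (use eq elim(2) in auto)
  qed
  have cols: "AE y in LT T. AE x in LT T. G x y = g2 (x, y)"
    using AE_sections_null_lborel(2)[OF N, of T] AE_LT_space[of T]
  proof eventually_elim
    case (elim y)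
    show ?case
      using elim(1) AE_LT_space[of T] by eventually_elim (use eq elim(2) in auto)
  qed
  show ?thesis
    using g2_LT rows cols by (rule that[of "\<lambda>x y. g2 (x, y)"])
qed

text \<open>A Borel kernel that agrees with \<open>G\<close> almost everywhere satisfies the row and column
  bounds and the Volterra property only almost everywhere; zeroing the offending rows and columns
  and everything on or above the diagonal restores them everywhere.\<close>

definition volterra_truncation :: "real \<Rightarrow> real \<Rightarrow> (real \<Rightarrow> real \<Rightarrow> real) \<Rightarrow> real \<Rightarrow> real \<Rightarrow> real" where
  "volterra_truncation T C g x y =
    (if y < x \<and> (\<integral>\<^sup>+y'. ennreal ((g x y')\<^sup>2) \<partial>LT T) \<le> ennreal C
       \<and> (\<integral>\<^sup>+x'. ennreal ((g x' y)\<^sup>2) \<partial>LT T) \<le> ennreal C then g x y else 0)"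

lemma volterra_volterra_truncation: "volterra T (volterra_truncation T C g)"
  by (simp add: volterra_def volterra_truncation_def)

lemma L2_kernel_volterra_truncation:
  assumes g: "(\<lambda>p. g (fst p) (snd p)) \<in> borel_measurable (LT T \<Otimes>\<^sub>M LT T)"
  shows "L2_kernel T (volterra_truncation T C g)"
proof -
  have [measurable]: "(\<lambda>p. g (fst p) (snd p)) \<in> borel_measurable (LT T \<Otimes>\<^sub>M LT T)"
    "(\<lambda>p. g (snd p) (fst p)) \<in> borel_measurable (LT T \<Otimes>\<^sub>M LT T)"
    using g measurable_comp[OF measurable_pair_swap' g] by (simp_all add: comp_def case_prod_beta)
  have [measurable]: "(\<lambda>x. \<integral>\<^sup>+y. ennreal ((g x y)\<^sup>2) \<partial>LT T) \<in> borel_measurable (LT T)"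
    "(\<lambda>y. \<integral>\<^sup>+x. ennreal ((g x y)\<^sup>2) \<partial>LT T) \<in> borel_measurable (LT T)"
    by (intro LT.borel_measurable_nn_integral; simp add: case_prod_beta)+
  have "(\<lambda>p. volterra_truncation T C g (fst p) (snd p)) \<in> borel_measurable (LT T \<Otimes>\<^sub>M LT T)"
    unfolding volterra_truncation_def by measurable
  moreover have "(\<integral>\<^sup>+y. ennreal ((volterra_truncation T C g x y)\<^sup>2) \<partial>LT T) \<le> ennreal C" for x
  proof (cases "(\<integral>\<^sup>+y. ennreal ((g x y)\<^sup>2) \<partial>LT T) \<le> ennreal C")
    case True
    have "(\<integral>\<^sup>+y. ennreal ((volterra_truncation T C g x y)\<^sup>2) \<partial>LT T) \<le> (\<integral>\<^sup>+y. ennreal ((g x y)\<^sup>2) \<partial>LT T)"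
      by (intro nn_integral_mono) (simp add: volterra_truncation_def)
    then show ?thesis
      using True by (rule order_trans)
  qed (simp add: volterra_truncation_def)
  moreover have "(\<integral>\<^sup>+x. ennreal ((volterra_truncation T C g x y)\<^sup>2) \<partial>LT T) \<le> ennreal C" for y
  proof (cases "(\<integral>\<^sup>+x. ennreal ((g x y)\<^sup>2) \<partial>LT T) \<le> ennreal C")
    case True
    have "(\<integral>\<^sup>+x. ennreal ((volterra_truncation T C g x y)\<^sup>2) \<partial>LT T) \<le> (\<integral>\<^sup>+x. ennreal ((g x y)\<^sup>2) \<partial>LT T)"
      by (intro nn_integral_mono) (simp add: volterra_truncation_def)
    then show ?thesis
      using True by (rule order_trans)
  qed (simp add: volterra_truncation_def)
  ultimately show ?thesis
    unfolding L2_kernel_def by blast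
qed

lemma nn_integral_square_AE_cong:
  assumes "AE y in M. u y = v y"
  shows "(\<integral>\<^sup>+y. ennreal ((u y)\<^sup>2) \<partial>M) = (\<integral>\<^sup>+y. ennreal ((v y)\<^sup>2) \<partial>M)"
proof -
  have "AE y in M. ennreal ((u y)\<^sup>2) = ennreal ((v y)\<^sup>2)"
    using assms by eventually_elim simp
  then show ?thesis
    by (rule nn_integral_cong_AE)
qed

lemma volterra_truncation_AE_eq:
  assumes row_bound: "\<And>x. x \<in> {0..T} \<Longrightarrow> (\<integral>\<^sup>+y. ennreal ((G x y)\<^sup>2) \<partial>LT T) \<le> ennreal C"
    and col_bound: "\<And>y. y \<in> {0..T} \<Longrightarrow> (\<integral>\<^sup>+x. ennreal ((G x y)\<^sup>2) \<partial>LT T) \<le> ennreal C"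
    and "volterra T G"
    and rows: "AE x in LT T. AE y in LT T. G x y = g x y"
    and cols: "AE y in LT T. AE x in LT T. G x y = g x y"
  shows "AE x in LT T. AE y in LT T. G x y = volterra_truncation T C g x y"
    and "AE y in LT T. AE x in LT T. G x y = volterra_truncation T C g x y"
proof -
  have row_ok: "AE x in LT T. (\<integral>\<^sup>+y. ennreal ((g x y)\<^sup>2) \<partial>LT T) \<le> ennreal C"
    using rows AE_LT_space
  proof eventually_elim
    case (elim x)
    then show ?case
      using row_bound[OF elim(2)] nn_integral_square_AE_cong[OF elim(1)] by simp
  qed
  have col_ok: "AE y in LT T. (\<integral>\<^sup>+x. ennreal ((g x y)\<^sup>2) \<partial>LT T) \<le> ennreal C"
    using cols AE_LT_space
  proof eventually_elim
    case (elim y)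
    then show ?case
      using col_bound[OF elim(2)] nn_integral_square_AE_cong[OF elim(1)] by simp
  qed
  have eq: "G x y = volterra_truncation T C g x y"
    if "x \<in> {0..T}" "y \<in> {0..T}" "G x y = g x y"
      "(\<integral>\<^sup>+y. ennreal ((g x y)\<^sup>2) \<partial>LT T) \<le> ennreal C" "(\<integral>\<^sup>+x. ennreal ((g x y)\<^sup>2) \<partial>LT T) \<le> ennreal C"
    for x y
    using that \<open>volterra T G\<close> by (auto simp: volterra_truncation_def volterra_def)
  show "AE x in LT T. AE y in LT T. G x y = volterra_truncation T C g x y"
    using rows row_ok AE_LT_space
  proof eventually_elim
    case (elim x)
    show ?case
      using elim(1) col_ok AE_LT_space by eventually_elim (use eq elim in auto)
  qed
  show "AE y in LT T. AE x in LT T. G x y = volterra_truncation T C g x y"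
    using cols col_ok AE_LT_space
  proof eventually_elim
    case (elim y)
    show ?case
      using elim(1) row_ok AE_LT_space by eventually_elim (use eq elim in auto)
  qed
qed

lemma nonneg_definite_AE_cong:
  assumes G: "nonneg_definite T G" and Gs: "L2_kernel T Gs"
    and rows: "AE x in LT T. AE y in LT T. G x y = Gs x y"
    and cols: "AE y in LT T. AE x in LT T. G x y = Gs x y"
  shows "nonneg_definite T Gs"
  unfolding nonneg_definite_def
proof
  fix h assume h: "h \<in> L2 T"
  have [measurable]: "h \<in> borel_measurable (LT T)"
    "(\<lambda>p. Gs (fst p) (snd p)) \<in> borel_measurable (LT T \<Otimes>\<^sub>M LT T)"
    "(\<lambda>p. Gs (snd p) (fst p)) \<in> borel_measurable (LT T \<Otimes>\<^sub>M LT T)"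
    using h L2_kernel_measurable[OF Gs] L2_kernel_measurable[OF L2_kernel_kadj[OF Gs]]
    by (auto simp: kadj_def intro: L2_borel_measurable)
  have "case_prod (\<lambda>t s. (Gs t s + Gs s t) * h s * h t) \<in> borel_measurable (LT T \<Otimes>\<^sub>M LT T)"
    unfolding case_prod_beta by measurable
  then have "(\<integral>t. (\<integral>s. (Gs t s + Gs s t) * h s * h t \<partial>LT T) \<partial>LT T)
      = (\<integral>t. (\<integral>s. (G t s + G s t) * h s * h t \<partial>LT T) \<partial>LT T)"
  proof (intro integral_LT_AE_cong LT.borel_measurable_lebesgue_integral)
    show "AE t in LT T. (\<integral>s. (Gs t s + Gs s t) * h s * h t \<partial>LT T) = (\<integral>s. (G t s + G s t) * h s * h t \<partial>LT T)"
      using rows cols AE_LT_space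
    proof eventually_elim
      case (elim t)
      have [measurable]: "(\<lambda>s. Gs t s) \<in> borel_measurable (LT T)" "(\<lambda>s. Gs s t) \<in> borel_measurable (LT T)"
        using L2_kernel_row_L2[OF Gs elim(3)] L2_kernel_col_L2[OF Gs elim(3)] by (auto intro: L2_borel_measurable)
      have "AE s in LT T. (Gs t s + Gs s t) * h s * h t = (G t s + G s t) * h s * h t"
        using elim(1,2) by eventually_elim simp
      then show ?case
        by (rule integral_LT_AE_cong[rotated]) measurable
    qed
  qed
  then show "0 \<le> (\<integral>t. (\<integral>s. (Gs t s + Gs s t) * h s * h t \<partial>LT T) \<partial>LT T)"
    using G h by (simp add: nonneg_definite_def)
qed

lemma kernel_class_Borel_representative:
  assumes "kernel_class T G"
  obtains Gs where "L2_kernel T Gs" "volterra T Gs" "nonneg_definite T Gs"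
    "AE x in LT T. AE y in LT T. G x y = Gs x y" "AE y in LT T. AE x in LT T. G x y = Gs x y"
proof -
  have G: "(\<lambda>(x, y). G x y) \<in> borel_measurable (lebesgue_on ({0..T} \<times> {0..T}))"
    "volterra T G" "nonneg_definite T G"
    using assms by (simp_all add: kernel_class_def)
  obtain C where
    row_bound: "\<And>x. x \<in> {0..T} \<Longrightarrow> (\<integral>\<^sup>+y. ennreal ((G x y)\<^sup>2) \<partial>LT T) \<le> ennreal C" and
    col_bound: "\<And>y. y \<in> {0..T} \<Longrightarrow> (\<integral>\<^sup>+x. ennreal ((G x y)\<^sup>2) \<partial>LT T) \<le> ennreal C"
    using assms unfolding kernel_class_def by blast
  obtain g where g: "(\<lambda>p. g (fst p) (snd p)) \<in> borel_measurable (LT T \<Otimes>\<^sub>M LT T)"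
    and rows: "AE x in LT T. AE y in LT T. G x y = g x y"
    and cols: "AE y in LT T. AE x in LT T. G x y = g x y"
    using G(1) by (rule Borel_kernel_AE_eq)
  note ae = volterra_truncation_AE_eq[OF row_bound col_bound G(2) rows cols]
  have Gs: "L2_kernel T (volterra_truncation T C g)"
    using g by (rule L2_kernel_volterra_truncation)
  show ?thesis
    using Gs volterra_volterra_truncation nonneg_definite_AE_cong[OF G(3) Gs ae] ae by (rule that)
qed

lemma D_op_AE_cong:
  assumes A: "L2_kernel T (Gt_kernel \<rho> Gs t)"
    and rows: "AE x in LT T. AE y in LT T. G x y = Gs x y"
    and cols: "AE y in LT T. AE x in LT T. G x y = Gs x y"
    and f: "f \<in> L2 T"
  shows "AE x in LT T. D_op T lam \<rho> \<phi> G t f x = D_op T lam \<rho> \<phi> Gs t f x"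
  using rows cols AE_LT_space
proof eventually_elim
  case (elim x)
  have "kop T (Gt_kernel \<rho> G t) f x = kop T (Gt_kernel \<rho> Gs t) f x"
    unfolding kop_def
  proof (rule integral_LT_AE_cong[symmetric])
    show "(\<lambda>y. Gt_kernel \<rho> Gs t x y * f y) \<in> borel_measurable (LT T)"
      by (rule borel_measurable_integrable[OF integrable_kernel_mult[OF A f elim(3)]])
    show "AE y in LT T. Gt_kernel \<rho> Gs t x y * f y = Gt_kernel \<rho> G t x y * f y"
      using elim(1) by eventually_elim (simp add: Gt_kernel_def Gtilde_def)
  qed
  moreover have "kop T (kadj (Gt_kernel \<rho> G t)) f x = kop T (kadj (Gt_kernel \<rho> Gs t)) f x"
    unfolding kop_def
  proof (rule integral_LT_AE_cong[symmetric])
    show "(\<lambda>y. kadj (Gt_kernel \<rho> Gs t) x y * f y) \<in> borel_measurable (LT T)"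
      by (rule borel_measurable_integrable[OF integrable_kernel_mult[OF L2_kernel_kadj[OF A] f elim(3)]])
    show "AE y in LT T. kadj (Gt_kernel \<rho> Gs t) x y * f y = kadj (Gt_kernel \<rho> G t) x y * f y"
      using elim(2) by eventually_elim (simp add: kadj_def Gt_kernel_def Gtilde_def)
  qed
  ultimately show ?case
    by (simp add: D_op_def)
qed

theorem lemma4p1:
  fixes T lam \<rho> \<phi> t :: real and G :: "real \<Rightarrow> real \<Rightarrow> real"
  assumes "T > 0" and "lam > 0" and "\<rho> \<ge> 0" and "\<phi> \<ge> 0"
    and "kernel_class T G"
    and "t \<in> {0..T}"
  shows
    \<comment> \<open>D_t is a bounded operator on L^2([0,T])\<close>
    "(\<forall>f\<in>L2 T. D_op T lam \<rho> \<phi> G t f \<in> L2 T) \<and>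
     (\<exists>C. \<forall>f\<in>L2 T. norm_L2 T (D_op T lam \<rho> \<phi> G t f) \<le> C * norm_L2 T f) \<and>
    \<comment> \<open>positive definite\<close>
     (\<forall>f\<in>L2 T. \<not> (AE x in LT T. f x = 0) \<longrightarrow> inner_L2 T (D_op T lam \<rho> \<phi> G t f) f > 0) \<and>
    \<comment> \<open>self-adjoint\<close>
     (\<forall>f\<in>L2 T. \<forall>g\<in>L2 T. inner_L2 T (D_op T lam \<rho> \<phi> G t f) g = inner_L2 T f (D_op T lam \<rho> \<phi> G t g)) \<and>
    \<comment> \<open>invertible: surjective, injective, with bounded inverse\<close>
     (\<forall>g\<in>L2 T. \<exists>f\<in>L2 T. AE x in LT T. D_op T lam \<rho> \<phi> G t f x = g x) \<and>
     (\<forall>f\<in>L2 T. (AE x in LT T. D_op T lam \<rho> \<phi> G t f x = 0) \<longrightarrow> (AE x in LT T. f x = 0)) \<and>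
     (\<exists>C. \<forall>f\<in>L2 T. norm_L2 T f \<le> C * norm_L2 T (D_op T lam \<rho> \<phi> G t f))"
proof -
  obtain Gs where Gs: "L2_kernel T Gs" "volterra T Gs" "nonneg_definite T Gs"
    and rows: "AE x in LT T. AE y in LT T. G x y = Gs x y"
    and cols: "AE y in LT T. AE x in LT T. G x y = Gs x y"
    using kernel_class_Borel_representative[OF \<open>kernel_class T G\<close>] by blast
  have A: "L2_kernel T (Gt_kernel \<rho> Gs t)"
    using Gs(1) by (rule L2_kernel_Gt_kernel)
  have ae: "AE x in LT T. D_op T lam \<rho> \<phi> G t f x = D_op T lam \<rho> \<phi> Gs t f x" if "f \<in> L2 T" for f
    using A rows cols that by (rule D_op_AE_cong)
  have "coercive_L2_operator T (D_op T lam \<rho> \<phi> Gs t) (2 * lam)"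
    using A inner_kop_Gt_kernel_nonneg[OF Gs \<open>\<rho> \<ge> 0\<close>] \<open>lam > 0\<close> \<open>\<phi> \<ge> 0\<close>
    by (rule coercive_L2_operator_D_op)
  then interpret D: coercive_L2_operator T "D_op T lam \<rho> \<phi> G t" "2 * lam"
    using ae by (rule coercive_L2_operator_AE_cong)
  have self_adjoint: "inner_L2 T (D_op T lam \<rho> \<phi> G t f) g = inner_L2 T f (D_op T lam \<rho> \<phi> G t g)"
    if f: "f \<in> L2 T" and g: "g \<in> L2 T" for f g
    using D_op_self_adjoint[OF A f g] inner_L2_AE_cong[OF D_op_L2[OF A f] g ae[OF f, THEN AE_symmetric]]
      inner_L2_AE_cong[OF D_op_L2[OF A g] f ae[OF g, THEN AE_symmetric]]
    by (simp add: inner_L2_commute[of T f])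
  show ?thesis
    using D.maps_L2 D.bounded D.positive_definite self_adjoint D.surjective D.injective D.inverse_bounded
    by auto
qed

end
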